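(* Let $G$ be a graph whose edge set is partitioned into the edge sets of $f$ degree-2 paths, each of length at least $f-1$. Then $G$ is geometric 1-planar.
   Context: Graphs are finite and simple. A degree-2 path in $G$ is a simple path all of whose internal vertices have degree two in $G$; its length is its number of edges. An embedding of a graph maps vertices to distinct points of $\mathbb{R}^2$ and each edge to a Jordan arc between its endpoints, such that edges intersect only at common endpoints or in proper crossings. A graph is geometric 1-planar if it admits an embedding in which every edge is a straight-line segment and every edge is crossed at most once. *)

theory Defs
  imports "HOL-Analysis.Analysis"
begin

definition simple_graph :: "'a set \<Rightarrow> 'a set set \<Rightarrow> bool" where
  "simple_graph V E \<longleftrightarrow> finite V \<and>
     (\<forall>e\<in>E. \<exists>u v. u \<noteq> v \<and> u \<in> V \<and> v \<in> V \<and> e = {u, v})"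

definition degree :: "'a set set \<Rightarrow> 'a \<Rightarrow> nat" where
  "degree E v = card {e \<in> E. v \<in> e}"

definition path_edges :: "'a list \<Rightarrow> 'a set set" where
  "path_edges ps = {{ps ! i, ps ! Suc i} | i. Suc i < length ps}"

definition path_length :: "'a list \<Rightarrow> nat" where
  "path_length ps = length ps - 1"

definition degree2_path :: "'a set \<Rightarrow> 'a set set \<Rightarrow> 'a list \<Rightarrow> bool" where
  "degree2_path V E ps \<longleftrightarrow> ps \<noteq> [] \<and> distinct ps \<and> set ps \<subseteq> V \<and>
     (\<forall>i. Suc i < length ps \<longrightarrow> {ps ! i, ps ! Suc i} \<in> E) \<and>
     (\<forall>i. 0 < i \<and> Suc i < length ps \<longrightarrow> degree E (ps ! i) = 2)"

definition seg :: "('a \<Rightarrow> real^2) \<Rightarrow> 'a set \<Rightarrow> (real^2) set" where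
  "seg p e = convex hull (p ` e)"

definition straight_line_embedding :: "'a set \<Rightarrow> 'a set set \<Rightarrow> ('a \<Rightarrow> real^2) \<Rightarrow> bool" where
  "straight_line_embedding V E p \<longleftrightarrow> inj_on p V \<and>
     (\<forall>e\<in>E. \<forall>w\<in>V. w \<notin> e \<longrightarrow> p w \<notin> seg p e) \<and>
     (\<forall>e\<in>E. \<forall>e'\<in>E. e \<noteq> e' \<longrightarrow>
        (e \<inter> e' \<noteq> {} \<longrightarrow> seg p e \<inter> seg p e' = p ` (e \<inter> e')) \<and>
        (e \<inter> e' = {} \<longrightarrow> (\<exists>x. seg p e \<inter> seg p e' \<subseteq> {x})))"

definition crossing_edges :: "'a set set \<Rightarrow> ('a \<Rightarrow> real^2) \<Rightarrow> 'a set \<Rightarrow> 'a set set" where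
  "crossing_edges E p e = {e' \<in> E. e \<inter> e' = {} \<and> seg p e \<inter> seg p e' \<noteq> {}}"

definition geometric_1_planar :: "'a set \<Rightarrow> 'a set set \<Rightarrow> bool" where
  "geometric_1_planar V E \<longleftrightarrow> (\<exists>p. straight_line_embedding V E p \<and>
     (\<forall>e\<in>E. card (crossing_edges E p e) \<le> 1))"

end

theory Submission
  imports Defs
begin

(* Every vertex that is not internal to a path is placed on the parabola y = x^2, and each path
   is drawn along chords of the parabola, its internal vertices subdividing the chords. Two chords
   cross at most once, and only if their endpoints interleave along the parabola; choosing the
   abscissae one at a time, no three chords pass through a common point off the parabola. A chord
   is crossed by at most one chord of each other path, so a path with at least f - 1 edges can
   place its internal vertices such that every edge contains at most one crossing. Parallel paths
   would share their chord, so all but one of them are bent at an internal vertex placed on the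
   parabola just after their common source; ordering these bend vertices suitably keeps the
   number of crossings on both halves within the number of edges available there. *)

section \<open>Partitions into degree-2 paths\<close>

lemma path_edges_rev_subset: "path_edges (rev ps) \<subseteq> path_edges ps"
proof
  fix e assume "e \<in> path_edges (rev ps)"
  then obtain i where i: "Suc i < length ps" "e = {rev ps ! i, rev ps ! Suc i}"
    unfolding path_edges_def by auto
  let ?i = "length ps - Suc (Suc i)"
  have "e = {ps ! ?i, ps ! Suc ?i}" "Suc ?i < length ps"
    using i by (auto simp: rev_nth Suc_diff_Suc)
  then show "e \<in> path_edges ps" unfolding path_edges_def by blast
qed

lemma path_edges_rev [simp]: "path_edges (rev ps) = path_edges ps"
  using path_edges_rev_subset[of ps] path_edges_rev_subset[of "rev ps"] by auto

lemma degree2_path_rev: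
  assumes "degree2_path V E ps"
  shows "degree2_path V E (rev ps)"
proof -
  have "{rev ps ! i, rev ps ! Suc i} \<in> E" if "Suc i < length ps" for i
  proof -
    have "{rev ps ! i, rev ps ! Suc i} \<in> path_edges (rev ps)"
      using that unfolding path_edges_def by auto
    then obtain i' where "Suc i' < length ps" "{rev ps ! i, rev ps ! Suc i} = {ps ! i', ps ! Suc i'}"
      unfolding path_edges_rev unfolding path_edges_def by auto
    then show ?thesis using assms unfolding degree2_path_def by auto
  qed
  moreover have "degree E (rev ps ! i) = 2" if "0 < i" "Suc i < length ps" for i
  proof -
    have "rev ps ! i = ps ! (length ps - Suc i)" "0 < length ps - Suc i" "Suc (length ps - Suc i) < length ps"
      using that by (auto simp: rev_nth)
    then show ?thesis using assms unfolding degree2_path_def by auto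
  qed
  ultimately show ?thesis using assms unfolding degree2_path_def by auto
qed

locale path_partition =
  fixes V :: "'a set" and E :: "'a set set" and f :: nat and P :: "nat \<Rightarrow> 'a list"
  assumes simple: "simple_graph V E"
    and degree2: "\<forall>i<f. degree2_path V E (P i)"
    and long: "\<forall>i<f. path_length (P i) \<ge> f - 1"
    and disjoint: "\<forall>i<f. \<forall>j<f. i \<noteq> j \<longrightarrow> path_edges (P i) \<inter> path_edges (P j) = {}"
    and covers: "(\<Union>i<f. path_edges (P i)) = E"
    and nontrivial: "\<forall>i<f. length (P i) \<ge> 2"
begin

definition plen :: "nat \<Rightarrow> nat" where "plen j = length (P j) - 1"

definition edge :: "nat \<Rightarrow> nat \<Rightarrow> 'a set" where "edge j k = {P j ! k, P j ! Suc k}"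

lemma finite_V: "finite V"
  using simple unfolding simple_graph_def by auto

lemma finite_E: "finite E"
proof -
  have "E \<subseteq> Pow V" using simple unfolding simple_graph_def by auto
  then show ?thesis using finite_V by (meson finite_Pow_iff finite_subset)
qed

lemma length_P: "j < f \<Longrightarrow> length (P j) = Suc (plen j)"
  using nontrivial unfolding plen_def by force

lemma plen_pos: "j < f \<Longrightarrow> 1 \<le> plen j"
  using nontrivial unfolding plen_def by force

lemma plen_ge: "j < f \<Longrightarrow> f - 1 \<le> plen j"
  using long unfolding plen_def path_length_def by auto

lemma P_nth_in_V: "j < f \<Longrightarrow> k \<le> plen j \<Longrightarrow> P j ! k \<in> V"
  using degree2 length_P[of j] unfolding degree2_path_def by (metis le_imp_less_Suc nth_mem subsetD)

lemma P_nth_inj: "j < f \<Longrightarrow> k \<le> plen j \<Longrightarrow> k' \<le> plen j \<Longrightarrow> P j ! k = P j ! k' \<Longrightarrow> k = k'"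
  using degree2 length_P[of j] unfolding degree2_path_def by (simp add: nth_eq_iff_index_eq)

lemma edge_in_path_edges: "j < f \<Longrightarrow> k < plen j \<Longrightarrow> edge j k \<in> path_edges (P j)"
  unfolding edge_def path_edges_def using length_P[of j] by auto

lemma edge_in_E: "j < f \<Longrightarrow> k < plen j \<Longrightarrow> edge j k \<in> E"
  using edge_in_path_edges covers by blast

lemma E_obtain_edge:
  assumes "e \<in> E"
  obtains j k where "j < f" "k < plen j" "e = edge j k"
proof -
  obtain j where j: "j < f" "e \<in> path_edges (P j)" using assms covers by blast
  then obtain k where "Suc k < length (P j)" "e = {P j ! k, P j ! Suc k}"
    unfolding path_edges_def by auto
  then show ?thesis using that[of j k] j length_P[of j] unfolding edge_def by auto
qed

lemma edge_eq_same_path: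
  assumes "j < f" "k < plen j" "k' < plen j" "edge j k = edge j k'"
  shows "k = k'"
proof -
  have "P j ! k = P j ! k' \<and> P j ! Suc k = P j ! Suc k' \<or> P j ! k = P j ! Suc k' \<and> P j ! Suc k = P j ! k'"
    using assms(4) unfolding edge_def by (auto simp: doubleton_eq_iff)
  then consider "P j ! k = P j ! k'" | "P j ! k = P j ! Suc k'" "P j ! Suc k = P j ! k'"
    by blast
  then show ?thesis
  proof cases
    case 1
    then show ?thesis using P_nth_inj[OF assms(1)] assms(2,3) by simp
  next
    case 2
    then have "k = Suc k'" "Suc k = k'" using P_nth_inj[OF assms(1)] assms(2,3) by simp_all
    then show ?thesis by simp
  qed
qed

lemma edge_eq:
  assumes "j < f" "j' < f" "k < plen j" "k' < plen j'" "edge j k = edge j' k'"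
  shows "j = j' \<and> k = k'"
proof -
  have "edge j k \<in> path_edges (P j) \<inter> path_edges (P j')"
    using edge_in_path_edges[of j k] edge_in_path_edges[of j' k'] assms by simp
  moreover have "path_edges (P j) \<inter> path_edges (P j') = {}" if "j \<noteq> j'"
    using disjoint assms(1,2) that by blast
  ultimately have "j = j'" by blast
  then show ?thesis using edge_eq_same_path assms by auto
qed

lemma edges_at_internal_vertex:
  assumes "j < f" "0 < k" "k < plen j"
  shows "{e \<in> E. P j ! k \<in> e} = {edge j (k - 1), edge j k}"
proof -
  have "degree2_path V E (P j)" using degree2 assms(1) by blast
  then have "card {e \<in> E. P j ! k \<in> e} = 2"
    using assms length_P[OF assms(1)] unfolding degree2_path_def degree_def by simp
  moreover have "edge j (k - 1) \<in> E" "edge j k \<in> E"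
    using edge_in_E assms by simp_all
  moreover have "P j ! k \<in> edge j (k - 1)" "P j ! k \<in> edge j k"
    using assms(2) unfolding edge_def by simp_all
  moreover have "edge j (k - 1) \<noteq> edge j k"
    using edge_eq_same_path[OF assms(1), of "k - 1" k] assms(2,3) by linarith
  ultimately show ?thesis by (metis (no_types, lifting) card_2_iff doubleton_eq_iff insertE mem_Collect_eq singletonD)
qed

text \<open>An internal vertex of a path has both its edges on that path, and the paths are
  edge-disjoint, so it occurs on no other path.\<close>
lemma internal_vertex_unique:
  assumes "j < f" "0 < k" "k < plen j" "j' < f" "k' \<le> plen j'" "P j ! k = P j' ! k'"
  shows "j' = j \<and> k' = k"
proof -
  obtain k'' where k'': "k'' < plen j'" "P j' ! k' \<in> edge j' k''"
  proof (cases "k' < plen j'")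
    case True
    then show ?thesis using that[of k'] unfolding edge_def by simp
  next
    case False
    then have "k' = Suc (k' - 1)" "k' - 1 < plen j'" using assms(5) plen_pos[OF assms(4)] by linarith+
    then show ?thesis using that[of "k' - 1"] unfolding edge_def by (metis insertCI)
  qed
  then have "edge j' k'' \<in> {e \<in> E. P j ! k \<in> e}"
    using edge_in_E[OF assms(4) k''(1)] assms(6) by simp
  then have "edge j' k'' = edge j (k - 1) \<or> edge j' k'' = edge j k"
    unfolding edges_at_internal_vertex[OF assms(1-3)] by simp
  then have "j' = j"
    using edge_eq[OF assms(4,1) k''(1)] assms(3) by (meson diff_le_self le_less_trans)
  then show ?thesis using P_nth_inj[OF assms(1), of k k'] assms by simp
qed

end

section \<open>Straight and bent paths\<close>

lemma real_nat_less_iff_add_one_le: "real m < real n \<longleftrightarrow> real m + 1 \<le> real n"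
  by (metis Suc_le_eq add.commute of_nat_Suc of_nat_le_iff of_nat_less_iff)

lemma nat_unit_interval_unique:
  assumes "real m \<le> x" "x < real m + 1" "real n \<le> x" "x < real n + 1"
  shows "m = n"
proof (rule ccontr)
  assume "m \<noteq> n"
  then have "real m + 1 \<le> real n \<or> real n + 1 \<le> real m"
    using real_nat_less_iff_add_one_le by (metis linorder_neqE_nat of_nat_less_iff)
  then show False using assms by linarith
qed

definition interleaved :: "real \<Rightarrow> real \<Rightarrow> real \<Rightarrow> real \<Rightarrow> bool" where
  "interleaved x1 y1 x2 y2 \<longleftrightarrow> (x1 < x2 \<and> x2 < y1 \<and> y1 < y2) \<or> (x2 < x1 \<and> x1 < y2 \<and> y2 < y1)"

lemma interleaved_sym: "interleaved x1 y1 x2 y2 \<longleftrightarrow> interleaved x2 y2 x1 y1"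
  unfolding interleaved_def by auto

lemma not_interleaved_shared_end:
  "\<not> interleaved x y x y'" "\<not> interleaved x y x' y" "\<not> interleaved x y y x'" "\<not> interleaved x y x' x"
  unfolding interleaved_def by auto

lemma not_interleaved_unit_interval:
  "real p < k \<Longrightarrow> k < real p + 1 \<Longrightarrow> \<not> interleaved (real m) (real n) (real p) k"
  unfolding interleaved_def using real_nat_less_iff_add_one_le[of p n] real_nat_less_iff_add_one_le[of p m]
  by linarith

lemma not_interleaved_two_unit_intervals:
  "p \<noteq> p' \<Longrightarrow> real p < k \<Longrightarrow> k < real p + 1 \<Longrightarrow> real p' < k' \<Longrightarrow> k' < real p' + 1 \<Longrightarrow>
   \<not> interleaved (real p) k (real p') k'"
  unfolding interleaved_def using real_nat_less_iff_add_one_le[of p p'] real_nat_less_iff_add_one_le[of p' p]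
    of_nat_eq_iff[of p p'] by linarith

locale oriented_path_partition = path_partition +
  fixes rank :: "'a \<Rightarrow> nat"
  assumes rank_inj: "inj_on rank V"
    and oriented: "\<forall>j<f. rank (P j ! 0) < rank (P j ! plen j)"
begin

definition src :: "nat \<Rightarrow> 'a" where "src j = P j ! 0"

definition tgt :: "nat \<Rightarrow> 'a" where "tgt j = P j ! plen j"

definition Internal :: "'a set" where
  "Internal = {v. \<exists>j<f. \<exists>k. 0 < k \<and> k < plen j \<and> v = P j ! k}"

definition Terminals :: "'a set" where "Terminals = V - Internal"

definition parallel :: "nat \<Rightarrow> nat \<Rightarrow> bool" where
  "parallel i j \<longleftrightarrow> src i = src j \<and> tgt i = tgt j"

text \<open>Of each class of parallel paths exactly one stays straight: the single edge if there is
  one (by simplicity there is at most one), otherwise the one of least index.\<close>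
definition bent :: "nat \<Rightarrow> bool" where
  "bent j \<longleftrightarrow> (\<exists>i<f. i \<noteq> j \<and> parallel i j \<and> (plen i = 1 \<or> (plen j \<noteq> 1 \<and> i < j)))"

text \<open>The bend vertex of a bent path is put just after its source in the order along the
  parabola, the closer to the source the farther the target (ties broken by index).\<close>
definition tgt_weight :: "nat \<Rightarrow> real" where
  "tgt_weight j = real (rank (tgt j)) + real j / real (Suc f)"

definition bend_key :: "nat \<Rightarrow> real" where
  "bend_key j = real (rank (src j)) + 1 / (2 + tgt_weight j)"

definition inner_bends :: "nat \<Rightarrow> nat set" where
  "inner_bends j = {i. i < f \<and> bent i \<and> src i = src j \<and> bend_key i < bend_key j}"

definition bend_idx :: "nat \<Rightarrow> nat" where "bend_idx j = max 1 (card (inner_bends j))"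

definition bend :: "nat \<Rightarrow> 'a" where "bend j = P j ! bend_idx j"

definition Anchors :: "'a set" where "Anchors = Terminals \<union> bend ` {j. j < f \<and> bent j}"

text \<open>Anchors are placed on the parabola in the order of their keys.\<close>
definition key :: "'a \<Rightarrow> real" where
  "key v = (if v \<in> Terminals then real (rank v) else bend_key (THE j. j < f \<and> bent j \<and> bend j = v))"

definition strokes :: "nat \<Rightarrow> ('a \<times> 'a) set" where
  "strokes j = (if bent j then {(src j, bend j), (bend j, tgt j)} else {(src j, tgt j)})"

definition Strokes :: "('a \<times> 'a) set" where "Strokes = (\<Union>j<f. strokes j)"

definition keys_interleaved :: "'a \<times> 'a \<Rightarrow> 'a \<times> 'a \<Rightarrow> bool" where
  "keys_interleaved s s' \<longleftrightarrow> interleaved (key (fst s)) (key (snd s)) (key (fst s')) (key (snd s'))"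

lemma src_in_V: "j < f \<Longrightarrow> src j \<in> V"
  unfolding src_def using P_nth_in_V by auto

lemma tgt_in_V: "j < f \<Longrightarrow> tgt j \<in> V"
  unfolding tgt_def using P_nth_in_V by auto

lemma rank_src_less_tgt: "j < f \<Longrightarrow> rank (src j) < rank (tgt j)"
  using oriented unfolding src_def tgt_def by auto

lemma src_eq_iff: "i < f \<Longrightarrow> j < f \<Longrightarrow> src i = src j \<longleftrightarrow> rank (src i) = rank (src j)"
  using rank_inj src_in_V[of i] src_in_V[of j] by (simp add: inj_on_eq_iff)

lemma src_in_Terminals:
  assumes "j < f"
  shows "src j \<in> Terminals"
proof -
  have "src j \<notin> Internal"
  proof
    assume "src j \<in> Internal"
    then obtain i k where "i < f" "0 < k" "k < plen i" "P i ! k = P j ! 0"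
      unfolding Internal_def src_def by auto
    then show False using internal_vertex_unique[of i k j 0] assms by simp
  qed
  then show ?thesis using src_in_V[OF assms] unfolding Terminals_def by simp
qed

lemma tgt_in_Terminals:
  assumes "j < f"
  shows "tgt j \<in> Terminals"
proof -
  have "tgt j \<notin> Internal"
  proof
    assume "tgt j \<in> Internal"
    then obtain i k where ik: "i < f" "0 < k" "k < plen i" "P i ! k = P j ! plen j"
      unfolding Internal_def tgt_def by auto
    have "j = i" "plen j = k" using internal_vertex_unique[OF ik(1-3) assms order_refl ik(4)] by auto
    with ik(3) show False by simp
  qed
  then show ?thesis using tgt_in_V[OF assms] unfolding Terminals_def by simp
qed

lemma single_edge_parallel_unique:
  assumes "i < f" "j < f" "plen i = 1" "plen j = 1" "parallel i j"
  shows "i = j"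
  using edge_eq[of i j 0 0] assms unfolding parallel_def src_def tgt_def edge_def by auto

lemma bent_plen:
  assumes "j < f" "bent j"
  shows "2 \<le> plen j"
proof (rule ccontr)
  assume "\<not> 2 \<le> plen j"
  then have "plen j = 1" using plen_pos[OF assms(1)] by linarith
  moreover obtain i where "i < f" "i \<noteq> j" "parallel i j" "plen i = 1 \<or> plen j \<noteq> 1"
    using assms(2) unfolding bent_def by blast
  ultimately show False using single_edge_parallel_unique[of i j] assms(1) by blast
qed

lemma straight_parallel_unique:
  "i < f \<Longrightarrow> i' < f \<Longrightarrow> \<not> bent i \<Longrightarrow> \<not> bent i' \<Longrightarrow> parallel i i' \<Longrightarrow> i = i'"
  unfolding bent_def parallel_def by (metis linorder_neqE_nat)

lemma bent_has_straight_parallel: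
  assumes "j < f" "bent j"
  obtains F where "F < f" "F \<noteq> j" "parallel F j" "\<not> bent F"
proof -
  define r where "r i = (if plen i = 1 then 0 else f) + i" for i
  obtain F where F: "F < f" "parallel F j" and F_least: "\<And>i. i < f \<Longrightarrow> parallel i j \<Longrightarrow> r F \<le> r i"
    using ex_has_least_nat[of "\<lambda>i. i < f \<and> parallel i j" j r] assms(1)
    unfolding parallel_def by blast
  have "\<not> bent F"
  proof
    assume "bent F"
    then obtain i where i: "i < f" "i \<noteq> F" "parallel i F" "plen i = 1 \<or> (plen F \<noteq> 1 \<and> i < F)"
      unfolding bent_def by auto
    then have "parallel i j" using F(2) unfolding parallel_def by auto
    then have "r F \<le> r i" using F_least i(1) by blast
    moreover have "plen F = 1 \<Longrightarrow> plen i \<noteq> 1"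
      using single_edge_parallel_unique[of i F] i F(1) by auto
    ultimately show False using i(1,4) unfolding r_def by (auto split: if_splits)
  qed
  then show ?thesis using that F assms(2) by blast
qed

lemma card_inner_bends:
  assumes "j < f" "bent j"
  shows "card (inner_bends j) \<le> f - 2"
proof -
  obtain F where F: "F < f" "F \<noteq> j" "\<not> bent F" using bent_has_straight_parallel assms by blast
  have "inner_bends j \<subseteq> {..<f} - {j, F}" using F unfolding inner_bends_def by auto
  then have "card (inner_bends j) \<le> card ({..<f} - {j, F})" by (intro card_mono) auto
  also have "\<dots> = f - 2" using F assms by (simp add: card_Diff_subset)
  finally show ?thesis .
qed

lemma bend_idx_bounds: assumes "j < f" "bent j" shows "1 \<le> bend_idx j" "bend_idx j < plen j"
  using bent_plen[OF assms] plen_ge[OF assms(1)] card_inner_bends[OF assms]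
  unfolding bend_idx_def by auto

lemma bend_in_Internal: "j < f \<Longrightarrow> bent j \<Longrightarrow> bend j \<in> Internal"
  using bend_idx_bounds[of j] unfolding bend_def Internal_def by (intro CollectI exI conjI) auto

lemma bend_in_V: "j < f \<Longrightarrow> bent j \<Longrightarrow> bend j \<in> V"
  using bend_idx_bounds P_nth_in_V unfolding bend_def by (simp add: less_imp_le)

lemma bend_notin_Terminals: "j < f \<Longrightarrow> bent j \<Longrightarrow> bend j \<notin> Terminals"
  using bend_in_Internal unfolding Terminals_def by auto

lemma bend_inj:
  assumes "j < f" "bent j" "j' < f" "bent j'" "bend j = bend j'"
  shows "j = j'"
  using internal_vertex_unique[of j "bend_idx j" j' "bend_idx j'"] assms
    bend_idx_bounds[OF assms(1,2)] bend_idx_bounds[OF assms(3,4)]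
  unfolding bend_def by simp

lemma bend_ne_src: "j < f \<Longrightarrow> bent j \<Longrightarrow> i < f \<Longrightarrow> bend j \<noteq> src i"
  using bend_notin_Terminals src_in_Terminals by metis

lemma bend_ne_tgt: "j < f \<Longrightarrow> bent j \<Longrightarrow> i < f \<Longrightarrow> bend j \<noteq> tgt i"
  using bend_notin_Terminals tgt_in_Terminals by metis

lemma tgt_weight_bounds:
  assumes "j < f"
  shows "real (rank (tgt j)) \<le> tgt_weight j" "tgt_weight j < real (rank (tgt j)) + 1"
proof -
  have "real j / real (Suc f) < 1" using assms by (simp add: divide_simps)
  then show "real (rank (tgt j)) \<le> tgt_weight j" "tgt_weight j < real (rank (tgt j)) + 1"
    unfolding tgt_weight_def by simp_all
qed

lemma bend_key_bounds: "real (rank (src j)) < bend_key j" "bend_key j < real (rank (src j)) + 1"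
proof -
  have "0 \<le> tgt_weight j" unfolding tgt_weight_def by simp
  then have "0 < 1 / (2 + tgt_weight j)" "1 / (2 + tgt_weight j) \<le> 1 / 2"
    by (simp_all add: frac_le)
  then show "real (rank (src j)) < bend_key j" "bend_key j < real (rank (src j)) + 1"
    unfolding bend_key_def by simp_all
qed

lemma bend_key_less_iff:
  assumes "src i = src j"
  shows "bend_key i < bend_key j \<longleftrightarrow> tgt_weight j < tgt_weight i"
proof -
  have "0 \<le> tgt_weight i" "0 \<le> tgt_weight j" unfolding tgt_weight_def by simp_all
  then have "0 < 2 + tgt_weight i" "0 < 2 + tgt_weight j" by linarith+
  then have "inverse (2 + tgt_weight i) < inverse (2 + tgt_weight j) \<longleftrightarrow> tgt_weight j < tgt_weight i"
    by (simp add: inverse_less_iff_less)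
  then show ?thesis unfolding bend_key_def assms by (simp add: inverse_eq_divide)
qed

lemma bend_key_less_imp_rank_tgt:
  assumes "i < f" "j < f" "src i = src j" "bend_key i < bend_key j"
  shows "rank (tgt j) \<le> rank (tgt i)"
  using bend_key_less_iff[OF assms(3)] assms(4) tgt_weight_bounds[OF assms(1)] tgt_weight_bounds[OF assms(2)]
    real_nat_less_iff_add_one_le[of "rank (tgt i)" "rank (tgt j)"] by linarith

lemma bend_key_inj:
  assumes "i < f" "j < f" "src i = src j" "bend_key i = bend_key j"
  shows "i = j"
proof -
  have "\<not> tgt_weight i < tgt_weight j" "\<not> tgt_weight j < tgt_weight i"
    using bend_key_less_iff[of j i] bend_key_less_iff[of i j] assms(3,4) by simp_all
  then have w: "tgt_weight i = tgt_weight j" by linarith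
  then have "rank (tgt i) = rank (tgt j)"
    using tgt_weight_bounds[OF assms(1)] tgt_weight_bounds[OF assms(2)]
      nat_unit_interval_unique[of "rank (tgt i)" "tgt_weight i" "rank (tgt j)"] by simp
  then show "i = j" using w unfolding tgt_weight_def by (simp add: divide_simps)
qed

lemma Anchors_cases: "v \<in> Anchors \<Longrightarrow> v \<in> Terminals \<or> (\<exists>j<f. bent j \<and> v = bend j)"
  unfolding Anchors_def by auto

lemma Terminals_in_Anchors: "v \<in> Terminals \<Longrightarrow> v \<in> Anchors"
  unfolding Anchors_def by auto

lemma bend_in_Anchors: "j < f \<Longrightarrow> bent j \<Longrightarrow> bend j \<in> Anchors"
  unfolding Anchors_def by auto

lemma Anchors_subset_V: "Anchors \<subseteq> V"
  using Anchors_cases bend_in_V unfolding Terminals_def by blast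

lemma finite_Anchors: "finite Anchors"
  using Anchors_subset_V finite_V by (rule finite_subset)

lemma key_Terminals: "v \<in> Terminals \<Longrightarrow> key v = real (rank v)"
  unfolding key_def by auto

lemma key_src: "j < f \<Longrightarrow> key (src j) = real (rank (src j))"
  using key_Terminals src_in_Terminals by auto

lemma key_tgt: "j < f \<Longrightarrow> key (tgt j) = real (rank (tgt j))"
  using key_Terminals tgt_in_Terminals by auto

lemma key_bend: assumes "j < f" "bent j" shows "key (bend j) = bend_key j"
proof -
  have "(THE i. i < f \<and> bent i \<and> bend i = bend j) = j"
    using bend_inj assms by (intro the_equality) auto
  then show ?thesis unfolding key_def using bend_notin_Terminals assms by auto
qed

lemma key_bend_bounds:
  "j < f \<Longrightarrow> bent j \<Longrightarrow> real (rank (src j)) < key (bend j) \<and> key (bend j) < real (rank (src j)) + 1"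
  using key_bend bend_key_bounds by auto

lemma src_eq_if_near_bend_key:
  assumes "i < f" "bent i" "j < f" "real (rank (src j)) < key (bend i)" "key (bend i) < real (rank (src j)) + 1"
  shows "src i = src j"
  using nat_unit_interval_unique[of "rank (src i)" "key (bend i)" "rank (src j)"] key_bend_bounds[OF assms(1,2)]
    assms(4,5) src_eq_iff[OF assms(1,3)] by auto

lemma key_inj_on_Anchors: "inj_on key Anchors"
proof (rule inj_onI)
  fix x y assume xy: "x \<in> Anchors" "y \<in> Anchors" "key x = key y"
  have Terminal_bend: False if "v \<in> Terminals" "i < f" "bent i" "key v = key (bend i)" for v i
    using that key_Terminals[of v] key_bend_bounds[of i] real_nat_less_iff_add_one_le[of "rank (src i)" "rank v"]
    by linarith
  have bend_bend: "i = j" if "i < f" "bent i" "j < f" "bent j" "key (bend i) = key (bend j)" for i j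
  proof -
    have "src i = src j" using src_eq_if_near_bend_key[of i j] key_bend_bounds[of j] that by simp
    then show ?thesis using bend_key_inj[of i j] key_bend that by simp
  qed
  have "x \<in> Terminals \<Longrightarrow> y \<in> Terminals \<Longrightarrow> x = y"
    using xy(3) key_Terminals rank_inj unfolding Terminals_def inj_on_def by auto
  then show "x = y"
    using Anchors_cases[OF xy(1)] Anchors_cases[OF xy(2)] xy(3) Terminal_bend bend_bend by metis
qed

lemma strokes_cases:
  "s \<in> strokes j \<Longrightarrow>
   (\<not> bent j \<and> s = (src j, tgt j)) \<or> (bent j \<and> s = (src j, bend j)) \<or> (bent j \<and> s = (bend j, tgt j))"
  unfolding strokes_def by (auto split: if_splits)

lemma Strokes_in_Anchors: "s \<in> Strokes \<Longrightarrow> fst s \<in> Anchors \<and> snd s \<in> Anchors"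
proof -
  assume "s \<in> Strokes"
  then obtain j where "j < f" "s \<in> strokes j" unfolding Strokes_def by auto
  then show ?thesis
    using strokes_cases[of s j] src_in_Terminals[of j] tgt_in_Terminals[of j] Terminals_in_Anchors
      bend_in_Anchors[of j] by auto
qed

lemma stroke_key_less: "s \<in> Strokes \<Longrightarrow> key (fst s) < key (snd s)"
proof -
  assume "s \<in> Strokes"
  then obtain j where j: "j < f" "s \<in> strokes j" unfolding Strokes_def by auto
  have "real (rank (src j)) + 1 \<le> real (rank (tgt j))"
    using rank_src_less_tgt[OF j(1)] real_nat_less_iff_add_one_le by simp
  then show ?thesis
    using strokes_cases[OF j(2)] key_src[OF j(1)] key_tgt[OF j(1)] key_bend_bounds[OF j(1)] by auto
qed

lemma stroke_owner_unique:
  assumes "i < f" "j < f" "s \<in> strokes i" "s \<in> strokes j"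
  shows "i = j"
  using strokes_cases[OF assms(3)] strokes_cases[OF assms(4)] assms(1,2)
    straight_parallel_unique[of i j] bend_inj[of i j]
    bend_ne_src[of j i] bend_ne_tgt[of j i] bend_ne_src[of i j] bend_ne_tgt[of i j]
  unfolding parallel_def by auto

definition owner :: "'a \<times> 'a \<Rightarrow> nat" where "owner s = (THE i. i < f \<and> s \<in> strokes i)"

definition crossers :: "'a \<times> 'a \<Rightarrow> ('a \<times> 'a) set" where
  "crossers s = {s' \<in> Strokes. keys_interleaved s s'}"

lemma owner_eq: "i < f \<Longrightarrow> s \<in> strokes i \<Longrightarrow> owner s = i"
  unfolding owner_def using stroke_owner_unique by blast

lemma owner_Strokes: "s \<in> Strokes \<Longrightarrow> owner s < f \<and> s \<in> strokes (owner s)"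
  unfolding Strokes_def using owner_eq by blast

lemma finite_Strokes: "finite Strokes"
  unfolding Strokes_def strokes_def by auto

lemma crosser_of_straight:
  assumes "j < f" "\<not> bent j" "i < f" "s' \<in> strokes i" "keys_interleaved (src j, tgt j) s'"
  shows "i \<noteq> j" "bent i \<Longrightarrow> s' = (bend i, tgt i)"
proof -
  show "i \<noteq> j"
    using assms strokes_cases[of s' j] not_interleaved_shared_end unfolding keys_interleaved_def by auto
  show "s' = (bend i, tgt i)" if "bent i"
    using assms strokes_cases[of s' i] that key_bend_bounds[OF assms(3) that]
      not_interleaved_unit_interval[of "rank (src i)" "key (bend i)" "rank (src j)" "rank (tgt j)"]
      key_src key_tgt unfolding keys_interleaved_def by auto
qed

lemma inner_bend_if_crosses_first_half:
  assumes "j < f" "bent j" "i < f" "bent i" "keys_interleaved (src j, bend j) (bend i, tgt i)"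
  shows "i \<in> inner_bends j"
proof -
  have kj: "key (bend j) < real (rank (src j)) + 1" using key_bend_bounds[OF assms(1,2)] by auto
  have "interleaved (real (rank (src j))) (key (bend j)) (key (bend i)) (real (rank (tgt i)))"
    using assms(5) key_src[OF assms(1)] key_tgt[OF assms(3)] unfolding keys_interleaved_def by simp
  then consider
      "real (rank (src j)) < key (bend i)" "key (bend i) < key (bend j)"
    | "real (rank (src j)) < real (rank (tgt i))" "real (rank (tgt i)) < key (bend j)"
    unfolding interleaved_def by auto
  then show ?thesis
  proof cases
    case 1
    then have "src i = src j" using src_eq_if_near_bend_key[OF assms(3,4,1)] kj by simp
    moreover have "bend_key i < bend_key j" using 1 key_bend assms by auto
    ultimately show ?thesis using assms(3,4) unfolding inner_bends_def by auto
  next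
    case 2
    then show ?thesis using real_nat_less_iff_add_one_le[of "rank (src j)" "rank (tgt i)"] kj by auto
  qed
qed

lemma crosser_of_first_half:
  assumes "j < f" "bent j" "i < f" "s' \<in> strokes i" "keys_interleaved (src j, bend j) s'"
  shows "i \<in> inner_bends j \<and> s' = (bend i, tgt i)"
proof -
  have kj: "real (rank (src j)) < key (bend j)" "key (bend j) < real (rank (src j)) + 1"
    using key_bend_bounds[OF assms(1,2)] by auto
  have cr: "interleaved (real (rank (src j))) (key (bend j)) (key (fst s')) (key (snd s'))"
    using assms(5) key_src[OF assms(1)] unfolding keys_interleaved_def by auto
  from strokes_cases[OF assms(4)] show ?thesis
  proof (elim disjE conjE)
    assume "s' = (src i, tgt i)"
    then show ?thesis
      using cr not_interleaved_unit_interval[OF kj] interleaved_sym key_src[OF assms(3)] key_tgt[OF assms(3)]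
      by auto
  next
    assume bi: "bent i" and s': "s' = (src i, bend i)"
    show ?thesis
    proof (cases "src i = src j")
      case True
      then show ?thesis
        using cr s' not_interleaved_shared_end(1) key_src[OF assms(1)] key_src[OF assms(3)] by simp
    next
      case False
      then show ?thesis
        using cr s' not_interleaved_two_unit_intervals[OF _ kj] key_bend_bounds[OF assms(3) bi]
          key_src[OF assms(3)] src_eq_iff[OF assms(3,1)] by auto
    qed
  next
    assume "bent i" "s' = (bend i, tgt i)"
    then show ?thesis using inner_bend_if_crosses_first_half[OF assms(1-3)] assms(5) by simp
  qed
qed

lemma crosser_of_second_half:
  assumes "j < f" "bent j" "i < f" "s' \<in> strokes i" "keys_interleaved (bend j, tgt j) s'"
  shows "i \<noteq> j" "i \<notin> inner_bends j" "\<not> (\<not> bent i \<and> parallel i j)"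
proof -
  have kj: "real (rank (src j)) < key (bend j)" "key (bend j) < real (rank (src j)) + 1"
    using key_bend_bounds[OF assms(1,2)] by auto
  have cr: "interleaved (key (bend j)) (real (rank (tgt j))) (key (fst s')) (key (snd s'))"
    using assms(5) key_tgt[OF assms(1)] unfolding keys_interleaved_def by auto
  show "i \<noteq> j"
  proof
    assume "i = j"
    then have "s' = (src j, bend j) \<or> s' = (bend j, tgt j)" using strokes_cases[OF assms(4)] assms(2) by auto
    then show False
      using cr kj key_src[OF assms(1)] key_tgt[OF assms(1)] unfolding interleaved_def by auto
  qed
  show "i \<notin> inner_bends j"
  proof
    assume "i \<in> inner_bends j"
    then have bi: "bent i" and si: "src i = src j" and lt: "bend_key i < bend_key j"
      unfolding inner_bends_def by auto
    have "rank (tgt j) \<le> rank (tgt i)" using bend_key_less_imp_rank_tgt[OF assms(3,1) si lt] .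
    moreover have "key (bend i) < key (bend j)" using lt key_bend assms bi by auto
    moreover have "s' = (src i, bend i) \<or> s' = (bend i, tgt i)" using strokes_cases[OF assms(4)] bi by auto
    ultimately show False
      using cr si kj key_src[OF assms(3)] key_tgt[OF assms(3)] unfolding interleaved_def by auto
  qed
  show "\<not> (\<not> bent i \<and> parallel i j)"
  proof
    assume "\<not> bent i \<and> parallel i j"
    then have "s' = (src j, tgt j)" using strokes_cases[OF assms(4)] unfolding parallel_def by auto
    then show False
      using cr kj key_src[OF assms(1)] key_tgt[OF assms(1)] unfolding interleaved_def by auto
  qed
qed

lemma crosser_of_second_half_bent:
  assumes "j < f" "bent j" "i < f" "bent i" "keys_interleaved (bend j, tgt j) (src i, bend i)"
  shows "\<not> keys_interleaved (bend j, tgt j) (bend i, tgt i)"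
proof -
  have kj: "real (rank (src j)) < key (bend j)" using key_bend_bounds[OF assms(1,2)] by auto
  have ki: "real (rank (src i)) < key (bend i)" "key (bend i) < real (rank (src i)) + 1"
    using key_bend_bounds[OF assms(3,4)] by auto
  have "interleaved (key (bend j)) (real (rank (tgt j))) (real (rank (src i))) (key (bend i))"
    using assms(5) key_src[OF assms(3)] key_tgt[OF assms(1)] unfolding keys_interleaved_def by simp
  then consider
      "real (rank (src i)) < real (rank (tgt j))" "real (rank (tgt j)) < key (bend i)"
    | "real (rank (src i)) < key (bend j)" "key (bend j) < key (bend i)"
    unfolding interleaved_def by auto
  then show ?thesis
  proof cases
    case 1
    then show ?thesis using real_nat_less_iff_add_one_le[of "rank (src i)" "rank (tgt j)"] ki by auto
  next
    case 2
    then have "src j = src i" using src_eq_if_near_bend_key[OF assms(1,2,3)] ki by simp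
    moreover have "bend_key j < bend_key i" using 2 key_bend assms by auto
    ultimately have "rank (tgt i) \<le> rank (tgt j)" using bend_key_less_imp_rank_tgt[OF assms(1,3)] by simp
    then show ?thesis
      using 2 key_tgt[OF assms(1)] key_tgt[OF assms(3)] unfolding keys_interleaved_def interleaved_def by auto
  qed
qed

lemma owner_inj_on_crossers:
  assumes "\<And>i s1 s2. i < f \<Longrightarrow> s1 \<in> strokes i \<Longrightarrow> s2 \<in> strokes i \<Longrightarrow> s1 \<in> crossers s \<Longrightarrow> s2 \<in> crossers s \<Longrightarrow> s1 = s2"
  shows "inj_on owner (crossers s)"
proof (rule inj_onI)
  fix s1 s2 assume s: "s1 \<in> crossers s" "s2 \<in> crossers s" "owner s1 = owner s2"
  have "s1 \<in> Strokes" "s2 \<in> Strokes" using s(1,2) unfolding crossers_def by simp_all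
  then have "owner s1 < f" "s1 \<in> strokes (owner s1)" "s2 \<in> strokes (owner s1)"
    using owner_Strokes[of s1] owner_Strokes[of s2] s(3) by simp_all
  then show "s1 = s2" using assms s(1,2) by blast
qed

lemma card_crossers_straight:
  assumes "j < f" "\<not> bent j"
  shows "card (crossers (src j, tgt j)) \<le> f - 1"
proof -
  have "inj_on owner (crossers (src j, tgt j))"
  proof (rule owner_inj_on_crossers)
    fix i s1 s2
    assume i: "i < f" "s1 \<in> strokes i" "s2 \<in> strokes i"
      and c: "s1 \<in> crossers (src j, tgt j)" "s2 \<in> crossers (src j, tgt j)"
    show "s1 = s2"
    proof (cases "bent i")
      case True
      then show ?thesis
        using crosser_of_straight(2)[OF assms i(1,2)] crosser_of_straight(2)[OF assms i(1,3)] c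
        unfolding crossers_def by simp
    next
      case False
      then show ?thesis using i(2,3) unfolding strokes_def by simp
    qed
  qed
  moreover have "owner ` crossers (src j, tgt j) \<subseteq> {..<f} - {j}"
    using crosser_of_straight(1)[OF assms] owner_Strokes unfolding crossers_def by fastforce
  ultimately have "card (crossers (src j, tgt j)) \<le> card ({..<f} - {j})"
    by (metis card_image card_mono finite_Diff finite_lessThan)
  then show ?thesis using assms(1) by simp
qed

lemma card_crossers_first_half:
  assumes "j < f" "bent j"
  shows "card (crossers (src j, bend j)) \<le> card (inner_bends j)"
proof -
  have "crossers (src j, bend j) \<subseteq> (\<lambda>i. (bend i, tgt i)) ` inner_bends j"
  proof
    fix s' assume "s' \<in> crossers (src j, bend j)"
    then have s': "s' \<in> Strokes" "keys_interleaved (src j, bend j) s'" unfolding crossers_def by simp_all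
    then have "owner s' < f" "s' \<in> strokes (owner s')" using owner_Strokes by simp_all
    then have "owner s' \<in> inner_bends j \<and> s' = (bend (owner s'), tgt (owner s'))"
      using crosser_of_first_half[OF assms _ _ s'(2)] by simp
    then show "s' \<in> (\<lambda>i. (bend i, tgt i)) ` inner_bends j" by blast
  qed
  moreover have "finite (inner_bends j)" unfolding inner_bends_def by auto
  ultimately show ?thesis by (meson card_image_le card_mono finite_imageI order_trans)
qed

lemma card_crossers_second_half:
  assumes "j < f" "bent j"
  shows "card (crossers (bend j, tgt j)) + card (inner_bends j) \<le> f - 2"
proof -
  obtain F where F: "F < f" "F \<noteq> j" "parallel F j" "\<not> bent F"
    using bent_has_straight_parallel assms by blast
  have "inj_on owner (crossers (bend j, tgt j))"
  proof (rule owner_inj_on_crossers)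
    fix i s1 s2
    assume i: "i < f" "s1 \<in> strokes i" "s2 \<in> strokes i"
      and c: "s1 \<in> crossers (bend j, tgt j)" "s2 \<in> crossers (bend j, tgt j)"
    show "s1 = s2"
    proof (cases "bent i")
      case True
      then show ?thesis
        using crosser_of_second_half_bent[OF assms i(1) True] c i(2,3)
        unfolding crossers_def strokes_def by auto
    next
      case False
      then show ?thesis using i(2,3) unfolding strokes_def by simp
    qed
  qed
  moreover have "owner ` crossers (bend j, tgt j) \<subseteq> {..<f} - (inner_bends j \<union> {j, F})"
  proof
    fix i assume "i \<in> owner ` crossers (bend j, tgt j)"
    then obtain s' where s': "s' \<in> Strokes" "keys_interleaved (bend j, tgt j) s'" "i = owner s'"
      unfolding crossers_def by auto
    then have i: "i < f" "s' \<in> strokes i" using owner_Strokes by simp_all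
    show "i \<in> {..<f} - (inner_bends j \<union> {j, F})"
      using crosser_of_second_half[OF assms i s'(2)] i(1) F(3,4) by auto
  qed
  ultimately have "card (crossers (bend j, tgt j)) \<le> card ({..<f} - (inner_bends j \<union> {j, F}))"
    by (metis card_image card_mono finite_Diff finite_lessThan)
  moreover have "inner_bends j \<union> {j, F} \<subseteq> {..<f}" "finite (inner_bends j)"
    using F assms unfolding inner_bends_def by auto
  moreover have "card (inner_bends j \<union> {j, F}) = card (inner_bends j) + 2"
    using F unfolding inner_bends_def by (auto simp: card_insert_if)
  ultimately show ?thesis
    using card_mono[of "{..<f}" "inner_bends j \<union> {j, F}"] by (simp add: card_Diff_subset)
qed

end

section \<open>Chords of the parabola\<close>

definition point :: "real \<Rightarrow> real \<Rightarrow> real^2" where "point x y = vector [x, y]"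

lemma point_eq_iff [simp]: "point x y = point x' y' \<longleftrightarrow> x = x' \<and> y = y'"
  unfolding point_def by (auto simp: vec_eq_iff forall_2)

lemma closed_segment_on_line:
  assumes "x1 \<le> x2"
  shows "closed_segment (point x1 (m * x1 + c)) (point x2 (m * x2 + c))
    = (\<lambda>x. point x (m * x + c)) ` {x1..x2}"
proof -
  have line: "point x (m * x + c) = point 0 c + x *\<^sub>R point 1 m" for x
    unfolding point_def by (auto simp: vec_eq_iff forall_2)
  have "closed_segment (x1 *\<^sub>R point 1 m) (x2 *\<^sub>R point 1 m) = (\<lambda>x. x *\<^sub>R point 1 m) ` {x1..x2}"
    using closed_segment_linear_image[OF linear_scaleR_left] closed_segment_eq_real_ivl1[OF assms] by metis
  then show ?thesis
    unfolding line closed_segment_translation by (simp add: image_image)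
qed

text \<open>The secant of the parabola \<open>y = x\<^sup>2\<close> through the abscissae \<open>\<tau> (fst s)\<close> and \<open>\<tau> (snd s)\<close>.\<close>
definition chord :: "('a \<Rightarrow> real) \<Rightarrow> 'a \<times> 'a \<Rightarrow> real \<Rightarrow> real" where
  "chord \<tau> s x = (\<tau> (fst s) + \<tau> (snd s)) * x - \<tau> (fst s) * \<tau> (snd s)"

lemma chord_eq: "chord \<tau> s x = x\<^sup>2 - (x - \<tau> (fst s)) * (x - \<tau> (snd s))"
  unfolding chord_def by (simp add: algebra_simps power2_eq_square)

lemma chord_at_ends: "chord \<tau> s (\<tau> (fst s)) = (\<tau> (fst s))\<^sup>2" "chord \<tau> s (\<tau> (snd s)) = (\<tau> (snd s))\<^sup>2"
  unfolding chord_eq by simp_all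

lemma chord_swap: "chord \<tau> (b, a) = chord \<tau> (a, b)"
  unfolding chord_def by (auto simp: algebra_simps)

lemma chord_above:
  "\<tau> (fst s) < x \<Longrightarrow> x < \<tau> (snd s) \<Longrightarrow> x\<^sup>2 < chord \<tau> s x"
  unfolding chord_eq by (simp add: mult_pos_neg)

lemma sum_prod_eq_imp_eq_or_swap:
  fixes p q p' q' :: real
  assumes "p + q = p' + q'" "p * q = p' * q'"
  shows "(p = p' \<and> q = q') \<or> (p = q' \<and> q = p')"
proof -
  have "(p - p') * (p - q') = p * p - p * (p' + q') + p' * q'" by (simp add: algebra_simps)
  also have "\<dots> = p * p - p * (p + q) + p * q" using assms by simp
  finally have "(p - p') * (p - q') = 0" by (simp add: algebra_simps)
  then have "p = p' \<or> p = q'" by simp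
  then show ?thesis using assms by auto
qed

text \<open>\<open>(x - lo) * (hi - x)\<close> is the height of the chord over \<open>[lo, hi]\<close> above the parabola at \<open>x\<close>;
  nested intervals give different heights, so chords meeting above the parabola interleave.\<close>
lemma chords_meet_interleaved:
  fixes lo hi lo' hi' x :: real
  assumes "lo < x" "x < hi" "lo' < x" "x < hi'" "(x - lo) * (hi - x) = (x - lo') * (hi' - x)"
    and "lo \<noteq> lo' \<or> hi \<noteq> hi'"
  shows "interleaved lo hi lo' hi'"
proof -
  have nested: False
    if "l1 \<le> l2" "h2 \<le> h1" "l1 \<noteq> l2 \<or> h1 \<noteq> h2" "l1 < x" "x < h1" "l2 < x" "x < h2"
      "(x - l1) * (h1 - x) = (x - l2) * (h2 - x)" for l1 h1 l2 h2 :: real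
  proof -
    have "(x - l2) * (h2 - x) < (x - l1) * (h1 - x)"
    proof (cases "l1 < l2")
      case True
      then have "(x - l2) * (h2 - x) < (x - l1) * (h2 - x)" using that by (intro mult_strict_right_mono) auto
      also have "\<dots> \<le> (x - l1) * (h1 - x)" using that by (intro mult_left_mono) auto
      finally show ?thesis .
    next
      case False
      then have "(x - l2) * (h2 - x) < (x - l2) * (h1 - x)" using that by (intro mult_strict_left_mono) auto
      also have "\<dots> \<le> (x - l1) * (h1 - x)" using that by (intro mult_right_mono) auto
      finally show ?thesis .
    qed
    then show False using that(8) by simp
  qed
  show ?thesis
  proof (cases "lo \<le> lo' \<and> hi' \<le> hi")
    case True
    then show ?thesis using nested[of lo lo' hi' hi] assms by auto
  next
    case outer: False
    show ?thesis
    proof (cases "lo' \<le> lo \<and> hi \<le> hi'")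
      case True
      then show ?thesis using nested[of lo' lo hi hi'] assms by auto
    next
      case False
      then show ?thesis using outer assms(1-4) unfolding interleaved_def by auto
    qed
  qed
qed

lemma finite_strict_upper_bound:
  fixes A :: "real set"
  assumes "finite A"
  obtains t where "\<forall>a\<in>A. a < t"
proof -
  have "a < Max (insert 0 A) + 1" if "a \<in> A" for a
  proof -
    have "a \<le> Max (insert 0 A)" using assms that by (intro Max_ge) auto
    then show ?thesis by simp
  qed
  then show ?thesis using that by blast
qed

lemma card_Un_le_two:
  assumes "finite A" "card A \<le> 2" "card B \<le> 1" "\<And>a1 a2. a1 \<in> A \<Longrightarrow> a2 \<in> A \<Longrightarrow> a1 \<noteq> a2 \<Longrightarrow> B = {}"
  shows "card (A \<union> B) \<le> 2"
proof (cases "card A \<le> 1")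
  case True
  then show ?thesis using assms(3) card_Un_le[of A B] by linarith
next
  case False
  then obtain a1 a2 where "a1 \<in> A" "a2 \<in> A" "a1 \<noteq> a2" using card_le_Suc0_iff_eq[OF assms(1)] by auto
  then show ?thesis using assms(2,4) by simp
qed

lemma chord_end_determined:
  assumes "chord \<tau> (v, q) x = y" "y \<noteq> x\<^sup>2"
  shows "\<tau> v = (y - \<tau> q * x) / (x - \<tau> q)"
proof -
  have "x \<noteq> \<tau> q" using assms chord_at_ends(2)[of \<tau> "(v, q)"] by auto
  moreover have "\<tau> v * (x - \<tau> q) = y - \<tau> q * x" using assms(1) unfolding chord_def by (simp add: algebra_simps)
  ultimately show ?thesis by (simp add: field_simps)
qed

context oriented_path_partition
begin

definition Strokes_within :: "'a set \<Rightarrow> ('a \<times> 'a) set" where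
  "Strokes_within S = {s \<in> Strokes. fst s \<in> S \<and> snd s \<in> S}"

definition key_monotone :: "('a \<Rightarrow> real) \<Rightarrow> 'a set \<Rightarrow> bool" where
  "key_monotone \<tau> S \<longleftrightarrow> (\<forall>x\<in>S. \<forall>y\<in>S. key x < key y \<longrightarrow> \<tau> x < \<tau> y)"

definition generic :: "('a \<Rightarrow> real) \<Rightarrow> 'a set \<Rightarrow> bool" where
  "generic \<tau> S \<longleftrightarrow> (\<forall>x y. y \<noteq> x\<^sup>2 \<longrightarrow> card {s \<in> Strokes_within S. chord \<tau> s x = y} \<le> 2)"

lemma Strokes_within_Anchors: "Strokes_within Anchors = Strokes"
  unfolding Strokes_within_def using Strokes_in_Anchors by auto

lemma finite_Strokes_within: "finite (Strokes_within S)"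
  unfolding Strokes_within_def using finite_Strokes by simp

lemma key_monotone_less_iff:
  assumes "key_monotone \<tau> S" "S \<subseteq> Anchors" "x \<in> S" "y \<in> S"
  shows "\<tau> x < \<tau> y \<longleftrightarrow> key x < key y"
proof
  show "\<tau> x < \<tau> y" if "key x < key y" using that assms(1,3,4) unfolding key_monotone_def by blast
  assume less: "\<tau> x < \<tau> y"
  then have "x \<noteq> y" by auto
  have "\<not> key y < key x"
  proof
    assume "key y < key x"
    then have "\<tau> y < \<tau> x" using assms(1,3,4) unfolding key_monotone_def by blast
    with less show False by simp
  qed
  moreover have "key x \<noteq> key y"
    using inj_onD[OF key_inj_on_Anchors] assms(2-4) \<open>x \<noteq> y\<close> by blast
  ultimately show "key x < key y" by simp
qed

lemma key_monotone_inj: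
  assumes "key_monotone \<tau> S" "S \<subseteq> Anchors" "x \<in> S" "y \<in> S" "\<tau> x = \<tau> y"
  shows "x = y"
proof -
  have "\<not> key x < key y" "\<not> key y < key x"
    using key_monotone_less_iff[OF assms(1,2)] assms(3-5) by (metis less_irrefl)+
  then have "key x = key y" by simp
  then show ?thesis using inj_onD[OF key_inj_on_Anchors] assms(2-4) by blast
qed

lemma Strokes_eq_if_same_ends:
  assumes "s \<in> Strokes" "s' \<in> Strokes" "fst s = fst s' \<and> snd s = snd s' \<or> fst s = snd s' \<and> snd s = fst s'"
  shows "s = s'"
  using assms stroke_key_less[OF assms(1)] stroke_key_less[OF assms(2)] by (cases s, cases s') auto

lemma chords_meet_once:
  assumes "key_monotone \<tau> S" "S \<subseteq> Anchors" "s \<in> Strokes_within S" "s' \<in> Strokes_within S" "s \<noteq> s'"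
    and "chord \<tau> s x = chord \<tau> s' x" "chord \<tau> s y = chord \<tau> s' y"
  shows "x = y"
proof (rule ccontr)
  assume "x \<noteq> y"
  let ?m = "\<tau> (fst s) + \<tau> (snd s)" and ?m' = "\<tau> (fst s') + \<tau> (snd s')"
  let ?p = "\<tau> (fst s) * \<tau> (snd s)" and ?p' = "\<tau> (fst s') * \<tau> (snd s')"
  have "(?m - ?m') * x = ?p - ?p'" "(?m - ?m') * y = ?p - ?p'"
    using assms(6,7) unfolding chord_def by (simp_all add: algebra_simps)
  then have "(?m - ?m') * (x - y) = 0" by (simp add: algebra_simps)
  then have "?m = ?m'" "?p = ?p'" using \<open>x \<noteq> y\<close> \<open>(?m - ?m') * x = ?p - ?p'\<close> by simp_all
  then have "\<tau> (fst s) = \<tau> (fst s') \<and> \<tau> (snd s) = \<tau> (snd s') \<or> \<tau> (fst s) = \<tau> (snd s') \<and> \<tau> (snd s) = \<tau> (fst s')"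
    by (rule sum_prod_eq_imp_eq_or_swap)
  then have "fst s = fst s' \<and> snd s = snd s' \<or> fst s = snd s' \<and> snd s = fst s'"
    using key_monotone_inj[OF assms(1,2)] assms(3,4) unfolding Strokes_within_def by blast
  then show False using Strokes_eq_if_same_ends assms(3-5) unfolding Strokes_within_def by blast
qed

lemma chords_meet_at_common_end:
  assumes "key_monotone \<tau> S" "S \<subseteq> Anchors" "s \<in> Strokes_within S" "s' \<in> Strokes_within S" "s \<noteq> s'"
    and "v \<in> {fst s, snd s}" "v \<in> {fst s', snd s'}" "chord \<tau> s x = chord \<tau> s' x"
  shows "x = \<tau> v"
proof -
  have "chord \<tau> s (\<tau> v) = chord \<tau> s' (\<tau> v)"
    using assms(6,7) chord_at_ends[of \<tau> s] chord_at_ends[of \<tau> s'] by auto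
  then show ?thesis using chords_meet_once[OF assms(1-5,8)] by simp
qed

lemma finite_meeting_points:
  assumes "key_monotone \<tau> S" "S \<subseteq> Anchors"
  shows "finite {(x, chord \<tau> s x) | s s' x. s \<in> Strokes_within S \<and> s' \<in> Strokes_within S \<and> s \<noteq> s'
    \<and> chord \<tau> s x = chord \<tau> s' x}" (is "finite ?M")
proof -
  let ?pt = "\<lambda>(s, s'). let x = THE x. chord \<tau> s x = chord \<tau> s' x in (x, chord \<tau> s x)"
  have "?M \<subseteq> ?pt ` (Strokes_within S \<times> Strokes_within S)"
  proof
    fix z assume "z \<in> ?M"
    then obtain s s' x where z: "z = (x, chord \<tau> s x)" "s \<in> Strokes_within S" "s' \<in> Strokes_within S"
      "s \<noteq> s'" "chord \<tau> s x = chord \<tau> s' x" by blast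
    then have "(THE x. chord \<tau> s x = chord \<tau> s' x) = x"
      using chords_meet_once[OF assms] by (intro the_equality) blast+
    then show "z \<in> ?pt ` (Strokes_within S \<times> Strokes_within S)"
      using z by (intro image_eqI[of _ _ "(s, s')"]) auto
  qed
  then show ?thesis using finite_Strokes_within by (meson finite_SigmaI finite_imageI finite_subset)
qed

lemma at_most_one_chord_from_vertex:
  assumes "key_monotone \<tau> S" "S \<subseteq> Anchors" "y \<noteq> x\<^sup>2"
  shows "card {s \<in> Strokes_within S. v \<in> {fst s, snd s} \<and> chord \<tau> s x = y} \<le> 1"
proof -
  have "s = s'" if "s \<in> Strokes_within S" "s' \<in> Strokes_within S" "v \<in> {fst s, snd s}" "v \<in> {fst s', snd s'}"
    "chord \<tau> s x = y" "chord \<tau> s' x = y" for s s'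
  proof (rule ccontr)
    assume "s \<noteq> s'"
    then have "x = \<tau> v" using chords_meet_at_common_end[OF assms(1,2) that(1,2) _ that(3,4)] that(5,6) by simp
    then have "y = x\<^sup>2" using that(3,5) chord_at_ends[of \<tau> s] by auto
    then show False using assms(3) by simp
  qed
  then show ?thesis using finite_Strokes_within by (auto simp: card_le_Suc0_iff_eq)
qed

lemma chord_from_new_vertex:
  assumes "s \<in> Strokes_within (insert x0 S)" "x0 \<in> {fst s, snd s}" "x0 \<notin> S"
    and "chord (\<tau>(x0 := t)) s x = y" "y \<noteq> x\<^sup>2"
  obtains q where "q \<in> S" "t = (y - \<tau> q * x) / (x - \<tau> q)"
proof -
  define q where "q = (if fst s = x0 then snd s else fst s)"
  have "s \<in> Strokes" using assms(1) unfolding Strokes_within_def by simp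
  then have "fst s \<noteq> snd s" using stroke_key_less by fastforce
  then have q: "q \<in> S" "q \<noteq> x0" "s = (x0, q) \<or> s = (q, x0)"
    using assms(1,2) unfolding q_def Strokes_within_def by (cases s; auto)+
  then have "chord (\<tau>(x0 := t)) (x0, q) x = y" using assms(4) chord_swap[of "\<tau>(x0 := t)" q x0] by auto
  from chord_end_determined[OF this assms(5)] have "t = (y - \<tau> q * x) / (x - \<tau> q)" using q(2) by simp
  then show ?thesis using that q(1) by blast
qed

lemma generic_insert:
  assumes mono: "key_monotone \<tau> S" and gen: "generic \<tau> S" and sub: "insert x0 S \<subseteq> Anchors"
    and new: "x0 \<notin> S" and last: "\<forall>y\<in>S. key y < key x0" and fin: "finite S"
  obtains t where "key_monotone (\<tau>(x0 := t)) (insert x0 S)" "generic (\<tau>(x0 := t)) (insert x0 S)"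
proof -
  define M where "M = {(x, chord \<tau> s x) | s s' x. s \<in> Strokes_within S \<and> s' \<in> Strokes_within S \<and> s \<noteq> s'
    \<and> chord \<tau> s x = chord \<tau> s' x}"
  define Bad where "Bad = (\<lambda>(q, x, y). (y - \<tau> q * x) / (x - \<tau> q)) ` (S \<times> M)"
  have "finite (\<tau> ` S \<union> Bad)"
    using finite_meeting_points[OF mono] sub fin unfolding Bad_def M_def by auto
  then obtain t where "\<forall>a\<in>\<tau> ` S \<union> Bad. a < t" by (rule finite_strict_upper_bound)
  then have t: "\<forall>y\<in>S. \<tau> y < t" "t \<notin> Bad" by blast+
  let ?\<tau> = "\<tau>(x0 := t)"
  have mono': "key_monotone ?\<tau> (insert x0 S)"
    using mono new t(1) last unfolding key_monotone_def by (auto simp: less_asym)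
  have old: "chord ?\<tau> s = chord \<tau> s" if "s \<in> Strokes_within S" for s
    using that new unfolding Strokes_within_def chord_def by auto
  have "card {s \<in> Strokes_within (insert x0 S). chord ?\<tau> s x = y} \<le> 2" if off: "y \<noteq> x\<^sup>2" for x y
  proof -
    define Old where "Old = {s \<in> Strokes_within S. chord \<tau> s x = y}"
    define New where "New = {s \<in> Strokes_within (insert x0 S). x0 \<in> {fst s, snd s} \<and> chord ?\<tau> s x = y}"
    have fin_Old: "finite Old" "finite New" using finite_Strokes_within unfolding Old_def New_def by simp_all
    have card_Old: "card Old \<le> 2" unfolding Old_def using gen[unfolded generic_def, rule_format, OF off] .
    have card_New: "card New \<le> 1" unfolding New_def using at_most_one_chord_from_vertex[OF mono' sub off] .
    have "New = {}" if s12: "s1 \<in> Old" "s2 \<in> Old" "s1 \<noteq> s2" for s1 s2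
    proof (rule ccontr)
      assume "New \<noteq> {}"
      then obtain s where "s \<in> Strokes_within (insert x0 S)" "x0 \<in> {fst s, snd s}" "chord ?\<tau> s x = y"
        unfolding New_def by auto
      then obtain q where q: "q \<in> S" "t = (y - \<tau> q * x) / (x - \<tau> q)"
        using chord_from_new_vertex[OF _ _ new _ off] by metis
      have "s1 \<in> Strokes_within S" "s2 \<in> Strokes_within S" "chord \<tau> s1 x = y" "chord \<tau> s2 x = y"
        using s12 unfolding Old_def by simp_all
      then have "(x, y) \<in> M" using s12(3) unfolding M_def by (intro CollectI exI[of _ s1] exI[of _ s2] exI[of _ x]) simp
      then have "t \<in> Bad" using q unfolding Bad_def by (auto intro: image_eqI[of _ _ "(q, x, y)"])
      then show False using t(2) by simp
    qed
    then have "card (Old \<union> New) \<le> 2" by (rule card_Un_le_two[OF fin_Old(1) card_Old card_New])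
    moreover have "{s \<in> Strokes_within (insert x0 S). chord ?\<tau> s x = y} \<subseteq> Old \<union> New"
      using old unfolding Old_def New_def Strokes_within_def by auto
    then have "card {s \<in> Strokes_within (insert x0 S). chord ?\<tau> s x = y} \<le> card (Old \<union> New)"
      using fin_Old by (intro card_mono) simp_all
    ultimately show ?thesis by linarith
  qed
  then show ?thesis using that mono' unfolding generic_def by blast
qed

lemma generic_placement_exists:
  obtains \<tau> where "key_monotone \<tau> Anchors" "generic \<tau> Anchors"
proof -
  have "S \<subseteq> Anchors \<longrightarrow> (\<exists>\<tau>. key_monotone \<tau> S \<and> generic \<tau> S)" if "finite S" for S
    using that
  proof (induction S rule: finite_ranking_induct[where f = key])
    case empty
    have "Strokes_within {} = {}" unfolding Strokes_within_def by auto
    then show ?case unfolding key_monotone_def generic_def by auto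
  next
    case (insert x S)
    show ?case
    proof
      assume sub: "insert x S \<subseteq> Anchors"
      show "\<exists>\<tau>. key_monotone \<tau> (insert x S) \<and> generic \<tau> (insert x S)"
      proof (cases "x \<in> S")
        case True
        then show ?thesis using insert sub by (simp add: insert_absorb)
      next
        case False
        obtain \<tau> where \<tau>: "key_monotone \<tau> S" "generic \<tau> S" using insert sub by auto
        have "key y < key x" if "y \<in> S" for y
          using insert(2) that inj_onD[OF key_inj_on_Anchors, of y x] sub False
          by (metis insert_subset less_le subsetD)
        then show ?thesis using generic_insert[OF \<tau> sub False _ insert(1)] by blast
      qed
    qed
  qed
  then show ?thesis using that finite_Anchors by blast
qed

end

section \<open>Subdividing an interval\<close>

definition subdivides :: "(nat \<Rightarrow> real) \<Rightarrow> nat \<Rightarrow> (nat \<Rightarrow> real set) \<Rightarrow> bool" where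
  "subdivides \<xi> n Z \<longleftrightarrow> (\<forall>k<n. \<xi> k < \<xi> (Suc k)) \<and> (\<forall>k. 0 < k \<and> k < n \<longrightarrow> \<xi> k \<notin> Z k) \<and>
     (\<forall>k<n. \<forall>x\<in>Z k. \<forall>y\<in>Z k. x \<in> {\<xi> k..\<xi> (Suc k)} \<longrightarrow> y \<in> {\<xi> k..\<xi> (Suc k)} \<longrightarrow> x = y)"

lemma subdivides_less:
  assumes "subdivides \<xi> n Z" "i < k" "k \<le> n"
  shows "\<xi> i < \<xi> k"
proof (rule lift_Suc_mono_less_ivl[of "{..<n}"])
  show "\<xi> m < \<xi> (Suc m)" if "m \<in> {..<n}" for m using assms(1) that unfolding subdivides_def by simp
qed (use assms(2,3) in auto)

lemma subdivides_le:
  "subdivides \<xi> n Z \<Longrightarrow> i \<le> k \<Longrightarrow> k \<le> n \<Longrightarrow> \<xi> i \<le> \<xi> k"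
  using subdivides_less[of \<xi> n Z i k] by (cases "i = k") auto

lemma subdivides_Cons:
  assumes \<xi>: "subdivides \<xi> m (\<lambda>_. Z')" "\<alpha> < \<xi> 0" "\<forall>z\<in>Z'. \<xi> 0 < z"
    and Z0: "Z0 \<subseteq> {\<alpha><..<\<xi> 0}" "\<forall>x\<in>Z0. \<forall>y\<in>Z0. x = y"
  shows "subdivides (\<lambda>k. if k = 0 then \<alpha> else \<xi> (k - 1)) (Suc m) (\<lambda>_. Z0 \<union> Z')"
proof -
  let ?\<xi> = "\<lambda>k. if k = 0 then \<alpha> else \<xi> (k - 1)"
  have above: "\<xi> 0 \<le> \<xi> k" if "k \<le> m" for k using subdivides_le[OF \<xi>(1) _ that] by simp
  have "?\<xi> k < ?\<xi> (Suc k)" if "k < Suc m" for k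
    using that \<xi>(1,2) unfolding subdivides_def by (cases k) auto
  moreover have "?\<xi> k \<notin> Z0 \<union> Z'" if "0 < k" "k < Suc m" for k
  proof -
    have "\<xi> 0 \<le> ?\<xi> k" using above[of "k - 1"] that by simp
    then have "?\<xi> k \<notin> Z0" using Z0(1) by auto
    moreover have "?\<xi> k \<notin> Z'" using \<xi>(1,3) that unfolding subdivides_def by (cases "k = 1") auto
    ultimately show ?thesis by simp
  qed
  moreover have "x = y"
    if "k < Suc m" "x \<in> Z0 \<union> Z'" "y \<in> Z0 \<union> Z'" "x \<in> {?\<xi> k..?\<xi> (Suc k)}" "y \<in> {?\<xi> k..?\<xi> (Suc k)}" for k x y
  proof (cases k)
    case 0
    then show ?thesis using that \<xi>(3) Z0(2) by fastforce
  next
    case (Suc k')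
    then have "x \<in> Z'" "y \<in> Z'" using that above[of k'] Z0(1) by auto
    then show ?thesis using \<xi>(1) that Suc unfolding subdivides_def by auto
  qed
  ultimately show ?thesis unfolding subdivides_def by blast
qed

lemma subdivision_first_cut:
  fixes Z :: "real set"
  assumes "finite Z" "Z \<subseteq> {\<alpha><..<\<beta>}" "\<alpha> < \<beta>"
  obtains \<gamma> where "\<alpha> < \<gamma>" "\<gamma> < \<beta>" "\<gamma> \<notin> Z" "\<forall>x\<in>Z. \<forall>y\<in>Z. x < \<gamma> \<longrightarrow> y < \<gamma> \<longrightarrow> x = y"
    "card {z \<in> Z. \<gamma> < z} \<le> card Z - 1"
proof (cases "Z = {}")
  case True
  then show ?thesis using that[of "(\<alpha> + \<beta>) / 2"] assms(3) by simp
next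
  case False
  define z0 where "z0 = Min Z"
  define u where "u = Min (insert \<beta> (Z - {z0}))"
  define \<gamma> where "\<gamma> = (z0 + u) / 2"
  have z0_in: "z0 \<in> Z" unfolding z0_def using assms(1) False by (rule Min_in)
  have z0: "z0 \<le> z" if "z \<in> Z" for z unfolding z0_def using assms(1) that by (rule Min_le)
  have z0_bounds: "\<alpha> < z0" "z0 < \<beta>" using z0_in assms(2) by auto
  have u: "u \<le> z" if "z \<in> Z - {z0}" for z unfolding u_def using assms(1) that by (intro Min_le) auto
  have u_le: "u \<le> \<beta>" unfolding u_def using assms(1) by (intro Min_le) auto
  have u_in: "u \<in> insert \<beta> (Z - {z0})" unfolding u_def using assms(1) by (intro Min_in) auto
  have "z0 < u"
  proof (cases "u = \<beta>")
    case True
    then show ?thesis using z0_bounds(2) by simp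
  next
    case False
    then have "u \<in> Z" "u \<noteq> z0" using u_in by auto
    then show ?thesis using z0 by (simp add: less_le)
  qed
  then have \<gamma>: "z0 < \<gamma>" "\<gamma> < u" unfolding \<gamma>_def by auto
  have left: "z = z0" if "z \<in> Z" "z < \<gamma>" for z
  proof (rule ccontr)
    assume "z \<noteq> z0"
    then have "u \<le> z" using u that(1) by blast
    then show False using that(2) \<gamma> by linarith
  qed
  have "\<gamma> \<notin> Z"
  proof
    assume "\<gamma> \<in> Z"
    then show False using u[of \<gamma>] \<gamma> by (cases "\<gamma> = z0") auto
  qed
  moreover have "card {z \<in> Z. \<gamma> < z} \<le> card Z - 1"
  proof -
    have "{z \<in> Z. \<gamma> < z} \<subseteq> Z - {z0}" using \<gamma>(1) by auto
    then have "card {z \<in> Z. \<gamma> < z} \<le> card (Z - {z0})" using assms(1) by (intro card_mono) auto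
    then show ?thesis using z0_in assms(1) by (simp add: card_Diff_singleton)
  qed
  moreover have "\<alpha> < \<gamma>" "\<gamma> < \<beta>" using z0_bounds \<gamma> u_le by linarith+
  ultimately show ?thesis using that[of \<gamma>] left by blast
qed

lemma subdivision_exists:
  fixes Z :: "real set"
  assumes "finite Z" "Z \<subseteq> {\<alpha><..<\<beta>}" "card Z \<le> n" "1 \<le> n" "\<alpha> < \<beta>"
  obtains \<xi> where "\<xi> 0 = \<alpha>" "\<xi> n = \<beta>" "subdivides \<xi> n (\<lambda>_. Z)"
  using assms
proof (induction n arbitrary: \<alpha> Z thesis)
  case 0
  then show ?case by simp
next
  case (Suc m)
  show ?case
  proof (cases "m = 0")
    case True
    have "\<forall>x\<in>Z. \<forall>y\<in>Z. x = y" using card_le_Suc0_iff_eq[OF Suc.prems(2)] Suc.prems(4) True by simp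
    then have "subdivides (\<lambda>k. if k = 0 then \<alpha> else \<beta>) (Suc m) (\<lambda>_. Z)"
      using Suc.prems(6) True unfolding subdivides_def by simp
    then show ?thesis using Suc.prems(1)[of "\<lambda>k. if k = 0 then \<alpha> else \<beta>"] True by simp
  next
    case False
    obtain \<gamma> where \<gamma>: "\<alpha> < \<gamma>" "\<gamma> < \<beta>" "\<gamma> \<notin> Z" "\<forall>x\<in>Z. \<forall>y\<in>Z. x < \<gamma> \<longrightarrow> y < \<gamma> \<longrightarrow> x = y"
      "card {z \<in> Z. \<gamma> < z} \<le> card Z - 1"
      using subdivision_first_cut[OF Suc.prems(2,3,6)] by blast
    define Z' where "Z' = {z \<in> Z. \<gamma> < z}"
    have Z': "finite Z'" "Z' \<subseteq> {\<gamma><..<\<beta>}" "card Z' \<le> m" "1 \<le> m"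
      using Suc.prems(2,3,4) \<gamma>(5) False unfolding Z'_def by auto
    obtain \<xi> where \<xi>: "\<xi> 0 = \<gamma>" "\<xi> m = \<beta>" "subdivides \<xi> m (\<lambda>_. Z')"
      by (rule Suc.IH[OF _ Z' \<gamma>(2)])
    have "subdivides (\<lambda>k. if k = 0 then \<alpha> else \<xi> (k - 1)) (Suc m) (\<lambda>_. {z \<in> Z. z < \<gamma>} \<union> Z')"
    proof (rule subdivides_Cons)
      show "\<forall>z\<in>Z'. \<xi> 0 < z" using \<xi>(1) unfolding Z'_def by simp
      show "{z \<in> Z. z < \<gamma>} \<subseteq> {\<alpha><..<\<xi> 0}" using \<xi>(1) Suc.prems(3) by auto
      show "\<forall>x\<in>{z \<in> Z. z < \<gamma>}. \<forall>y\<in>{z \<in> Z. z < \<gamma>}. x = y" using \<gamma>(4) by simp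
    qed (use \<xi> \<gamma>(1) in simp_all)
    moreover have "z < \<gamma> \<or> \<gamma> < z" if "z \<in> Z" for z
      using that \<gamma>(3) by (cases z \<gamma> rule: linorder_cases) auto
    then have "{z \<in> Z. z < \<gamma>} \<union> Z' = Z" unfolding Z'_def by auto
    ultimately show ?thesis using Suc.prems(1)[of "\<lambda>k. if k = 0 then \<alpha> else \<xi> (k - 1)"] \<xi>(2) by simp
  qed
qed

lemma subdivides_append:
  assumes "subdivides \<xi>1 n1 Z1" "subdivides \<xi>2 n2 Z2" "\<xi>1 n1 = \<xi>2 0" "\<xi>2 0 \<notin> Z2 0"
  shows "subdivides (\<lambda>k. if k \<le> n1 then \<xi>1 k else \<xi>2 (k - n1)) (n1 + n2)
    (\<lambda>k. if k < n1 then Z1 k else Z2 (k - n1))"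
proof -
  let ?\<xi> = "\<lambda>k. if k \<le> n1 then \<xi>1 k else \<xi>2 (k - n1)"
  let ?Z = "\<lambda>k. if k < n1 then Z1 k else Z2 (k - n1)"
  have right: "?\<xi> k = \<xi>2 (k - n1)" if "n1 \<le> k" for k
    using that assms(3) by (cases "k = n1") auto
  have "?\<xi> k < ?\<xi> (Suc k) \<and> (\<forall>x\<in>?Z k. \<forall>y\<in>?Z k. x \<in> {?\<xi> k..?\<xi> (Suc k)} \<longrightarrow> y \<in> {?\<xi> k..?\<xi> (Suc k)} \<longrightarrow> x = y)"
    if "k < n1 + n2" for k
  proof (cases "k < n1")
    case True
    then show ?thesis using assms(1) unfolding subdivides_def by auto
  next
    case False
    then have "?\<xi> k = \<xi>2 (k - n1)" "?\<xi> (Suc k) = \<xi>2 (Suc (k - n1))" "k - n1 < n2"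
      using right[of k] right[of "Suc k"] that by (auto simp: Suc_diff_le)
    then show ?thesis using assms(2) False unfolding subdivides_def by auto
  qed
  moreover have "?\<xi> k \<notin> ?Z k" if "0 < k" "k < n1 + n2" for k
    using assms that right[of k] unfolding subdivides_def by (cases k n1 rule: linorder_cases) auto
  ultimately show ?thesis unfolding subdivides_def by blast
qed

section \<open>Drawing the paths along chords\<close>

locale parabola_placement = oriented_path_partition +
  fixes \<tau> :: "'a \<Rightarrow> real"
  assumes monotone: "key_monotone \<tau> Anchors" and generic: "generic \<tau> Anchors"
begin

definition lo :: "'a \<times> 'a \<Rightarrow> real" where "lo s = \<tau> (fst s)"

definition hi :: "'a \<times> 'a \<Rightarrow> real" where "hi s = \<tau> (snd s)"

definition meets :: "'a \<times> 'a \<Rightarrow> 'a \<times> 'a \<Rightarrow> real \<Rightarrow> bool" where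
  "meets s s' x \<longleftrightarrow> lo s < x \<and> x < hi s \<and> lo s' < x \<and> x < hi s' \<and> chord \<tau> s x = chord \<tau> s' x"

definition crossings :: "'a \<times> 'a \<Rightarrow> real set" where
  "crossings s = {x. \<exists>s'\<in>Strokes. s' \<noteq> s \<and> meets s s' x}"

lemma tau_inj: "x \<in> Anchors \<Longrightarrow> y \<in> Anchors \<Longrightarrow> \<tau> x = \<tau> y \<Longrightarrow> x = y"
  using key_monotone_inj[OF monotone] by blast

lemma tau_less_iff: "x \<in> Anchors \<Longrightarrow> y \<in> Anchors \<Longrightarrow> \<tau> x < \<tau> y \<longleftrightarrow> key x < key y"
  using key_monotone_less_iff[OF monotone] by blast

lemma lo_less_hi: "s \<in> Strokes \<Longrightarrow> lo s < hi s"
  unfolding lo_def hi_def using Strokes_in_Anchors[of s] stroke_key_less[of s] tau_less_iff by simp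

lemma chord_lo_hi: "chord \<tau> s (lo s) = (lo s)\<^sup>2" "chord \<tau> s (hi s) = (hi s)\<^sup>2"
  unfolding lo_def hi_def by (simp_all add: chord_at_ends)

lemma chord_above_lo_hi: "lo s < x \<Longrightarrow> x < hi s \<Longrightarrow> x\<^sup>2 < chord \<tau> s x"
  unfolding lo_def hi_def by (rule chord_above)

lemma meets_sym: "meets s s' x \<longleftrightarrow> meets s' s x"
  unfolding meets_def by auto

lemma chords_meet_once_Strokes:
  "s \<in> Strokes \<Longrightarrow> s' \<in> Strokes \<Longrightarrow> s \<noteq> s' \<Longrightarrow> chord \<tau> s x = chord \<tau> s' x \<Longrightarrow> chord \<tau> s y = chord \<tau> s' y \<Longrightarrow> x = y"
  using chords_meet_once[OF monotone order_refl] Strokes_within_Anchors by blast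

lemma meets_keys_interleaved:
  assumes "s \<in> Strokes" "s' \<in> Strokes" "s \<noteq> s'" "meets s s' x"
  shows "keys_interleaved s s'"
proof -
  have m: "lo s < x" "x < hi s" "lo s' < x" "x < hi s'" "chord \<tau> s x = chord \<tau> s' x"
    using assms(4) unfolding meets_def by auto
  have A: "fst s \<in> Anchors" "snd s \<in> Anchors" "fst s' \<in> Anchors" "snd s' \<in> Anchors"
    using Strokes_in_Anchors assms(1,2) by auto
  have "lo s \<noteq> lo s' \<or> hi s \<noteq> hi s'"
  proof (rule ccontr)
    assume "\<not> (lo s \<noteq> lo s' \<or> hi s \<noteq> hi s')"
    then have "fst s = fst s'" "snd s = snd s'" using tau_inj A unfolding lo_def hi_def by simp_all
    then show False using assms(3) by (simp add: prod_eq_iff)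
  qed
  moreover have "(x - lo s) * (hi s - x) = (x - lo s') * (hi s' - x)"
    using m(5) unfolding chord_eq lo_def hi_def by (simp add: algebra_simps)
  ultimately have "interleaved (lo s) (hi s) (lo s') (hi s')"
    using chords_meet_interleaved m(1-4) by blast
  then show ?thesis
    unfolding keys_interleaved_def interleaved_def lo_def hi_def using tau_less_iff A by simp
qed

lemma meets_unique: "s \<in> Strokes \<Longrightarrow> s' \<in> Strokes \<Longrightarrow> s \<noteq> s' \<Longrightarrow> meets s s' x \<Longrightarrow> meets s s' y \<Longrightarrow> x = y"
  using chords_meet_once_Strokes unfolding meets_def by blast

lemma no_triple_meeting:
  assumes "s \<in> Strokes" "s' \<in> Strokes" "s'' \<in> Strokes" "s \<noteq> s'" "s \<noteq> s''" "s' \<noteq> s''"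
    and "meets s s' x" "meets s s'' x"
  shows False
proof -
  let ?y = "chord \<tau> s x"
  have "x\<^sup>2 < ?y" using assms(7) chord_above_lo_hi unfolding meets_def by blast
  then have "card {s \<in> Strokes. chord \<tau> s x = ?y} \<le> 2"
    using generic unfolding generic_def Strokes_within_Anchors by simp
  moreover have "{s, s', s''} \<subseteq> {s \<in> Strokes. chord \<tau> s x = ?y}"
    using assms unfolding meets_def by auto
  ultimately have "card {s, s', s''} \<le> 2"
    using card_mono[of "{s \<in> Strokes. chord \<tau> s x = ?y}" "{s, s', s''}"] finite_Strokes by simp
  then show False using assms(4-6) by simp
qed

lemma crossings_subset: "crossings s \<subseteq> {lo s<..<hi s}"
  unfolding crossings_def meets_def by auto

lemma finite_crossings_card:
  assumes "s \<in> Strokes"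
  shows "finite (crossings s)" "card (crossings s) \<le> card (crossers s)"
proof -
  have "crossings s \<subseteq> (\<lambda>s'. THE x. meets s s' x) ` crossers s"
  proof
    fix x assume "x \<in> crossings s"
    then obtain s' where s': "s' \<in> Strokes" "s' \<noteq> s" "meets s s' x" unfolding crossings_def by auto
    then have "(THE x. meets s s' x) = x" using meets_unique[OF assms] by blast
    moreover have "s' \<in> crossers s"
      using meets_keys_interleaved[OF assms] s' unfolding crossers_def by auto
    ultimately show "x \<in> (\<lambda>s'. THE x. meets s s' x) ` crossers s" by force
  qed
  moreover have "finite (crossers s)" unfolding crossers_def using finite_Strokes by simp
  ultimately show "finite (crossings s)" "card (crossings s) \<le> card (crossers s)"
    using finite_subset card_mono card_image_le order_trans by (metis finite_imageI)+
qed

definition stroke_of :: "nat \<Rightarrow> nat \<Rightarrow> 'a \<times> 'a" where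
  "stroke_of j k = (if bent j then (if k < bend_idx j then (src j, bend j) else (bend j, tgt j))
    else (src j, tgt j))"

text \<open>The abscissae of the vertices of path \<open>j\<close>.\<close>
definition admissible :: "nat \<Rightarrow> (nat \<Rightarrow> real) \<Rightarrow> bool" where
  "admissible j \<xi> \<longleftrightarrow> \<xi> 0 = \<tau> (src j) \<and> \<xi> (plen j) = \<tau> (tgt j) \<and> (bent j \<longrightarrow> \<xi> (bend_idx j) = \<tau> (bend j)) \<and>
     subdivides \<xi> (plen j) (\<lambda>k. crossings (stroke_of j k))"

lemma stroke_of_in_strokes: "stroke_of j k \<in> strokes j"
  unfolding stroke_of_def strokes_def by auto

lemma stroke_of_in_Strokes: "j < f \<Longrightarrow> stroke_of j k \<in> Strokes"
  using stroke_of_in_strokes unfolding Strokes_def by blast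

lemma subdivides_stroke:
  assumes "s \<in> Strokes" "card (crossers s) \<le> n" "1 \<le> n"
  obtains \<xi> where "\<xi> 0 = lo s" "\<xi> n = hi s" "subdivides \<xi> n (\<lambda>_. crossings s)"
proof (rule subdivision_exists[OF finite_crossings_card(1)[OF assms(1)] crossings_subset])
  show "card (crossings s) \<le> n" using finite_crossings_card(2)[OF assms(1)] assms(2) by linarith
qed (use assms(3) lo_less_hi[OF assms(1)] in simp_all)

lemma admissible_exists_straight:
  assumes "j < f" "\<not> bent j"
  obtains \<xi> where "admissible j \<xi>"
proof -
  have s: "(src j, tgt j) \<in> Strokes" using assms unfolding Strokes_def strokes_def by auto
  have "card (crossers (src j, tgt j)) \<le> plen j"
    using card_crossers_straight[OF assms] plen_ge[OF assms(1)] by linarith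
  then obtain \<xi> where "\<xi> 0 = lo (src j, tgt j)" "\<xi> (plen j) = hi (src j, tgt j)"
    "subdivides \<xi> (plen j) (\<lambda>_. crossings (src j, tgt j))"
    using subdivides_stroke[OF s] plen_pos[OF assms(1)] by blast
  moreover have "stroke_of j = (\<lambda>_. (src j, tgt j))" using assms(2) unfolding stroke_of_def by auto
  ultimately show ?thesis using that assms(2) unfolding admissible_def lo_def hi_def by auto
qed

text \<open>The crossing bounds for the two halves are exactly what makes \<open>bend_idx j\<close> pieces on the
  first stroke and \<open>plen j - bend_idx j\<close> pieces on the second suffice.\<close>
lemma admissible_exists_bent:
  assumes "j < f" "bent j"
  obtains \<xi> where "admissible j \<xi>"
proof -
  let ?s1 = "(src j, bend j)" and ?s2 = "(bend j, tgt j)" and ?n1 = "bend_idx j"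
  let ?n2 = "plen j - bend_idx j"
  have s: "?s1 \<in> Strokes" "?s2 \<in> Strokes" using assms unfolding Strokes_def strokes_def by auto
  have n: "1 \<le> ?n1" "?n1 < plen j" using bend_idx_bounds[OF assms] by auto
  have "card (crossers ?s1) \<le> ?n1"
    using card_crossers_first_half[OF assms] unfolding bend_idx_def by linarith
  then obtain \<xi>1 where \<xi>1: "\<xi>1 0 = \<tau> (src j)" "\<xi>1 ?n1 = \<tau> (bend j)" "subdivides \<xi>1 ?n1 (\<lambda>_. crossings ?s1)"
    using subdivides_stroke[OF s(1)] n(1) unfolding lo_def hi_def by auto
  have "1 \<le> ?n2" using n by simp
  have "card (crossers ?s2) \<le> ?n2"
    using card_crossers_second_half[OF assms] plen_ge[OF assms(1)] bent_plen[OF assms]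
    unfolding bend_idx_def by linarith
  then obtain \<xi>2 where \<xi>2: "\<xi>2 0 = \<tau> (bend j)" "\<xi>2 ?n2 = \<tau> (tgt j)" "subdivides \<xi>2 ?n2 (\<lambda>_. crossings ?s2)"
    using subdivides_stroke[OF s(2) _ \<open>1 \<le> ?n2\<close>] unfolding lo_def hi_def by auto
  have "\<tau> (bend j) \<notin> crossings ?s2" using crossings_subset[of ?s2] unfolding lo_def by auto
  then have "subdivides (\<lambda>k. if k \<le> ?n1 then \<xi>1 k else \<xi>2 (k - ?n1)) (?n1 + ?n2)
      (\<lambda>k. if k < ?n1 then crossings ?s1 else crossings ?s2)"
    using subdivides_append[OF \<xi>1(3) \<xi>2(3)] \<xi>1(2) \<xi>2(1) by simp
  moreover have "(\<lambda>k. if k < ?n1 then crossings ?s1 else crossings ?s2) = (\<lambda>k. crossings (stroke_of j k))"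
    using assms(2) unfolding stroke_of_def by (auto simp: fun_eq_iff)
  moreover have "?n1 + ?n2 = plen j" using n by simp
  ultimately show ?thesis
    using that[of "\<lambda>k. if k \<le> ?n1 then \<xi>1 k else \<xi>2 (k - ?n1)"] \<xi>1(1,2) \<xi>2(2) n
    unfolding admissible_def by simp
qed

lemma admissible_exists: "\<exists>X. \<forall>j<f. admissible j (X j)"
proof -
  have ex: "\<exists>\<xi>. j < f \<longrightarrow> admissible j \<xi>" for j
  proof (cases "j < f \<and> bent j")
    case True
    then obtain \<xi> where "admissible j \<xi>" by (metis admissible_exists_bent)
    then show ?thesis by blast
  next
    case False
    then obtain \<xi> where "j < f \<longrightarrow> admissible j \<xi>" by (metis admissible_exists_straight)
    then show ?thesis by blast
  qed
  then show ?thesis using choice[of "\<lambda>j \<xi>. j < f \<longrightarrow> admissible j \<xi>"] by blast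
qed

end

locale parabola_drawing = parabola_placement +
  fixes X :: "nat \<Rightarrow> nat \<Rightarrow> real"
  assumes admissible_X: "\<forall>j<f. admissible j (X j)"
begin

definition on_chord :: "'a \<times> 'a \<Rightarrow> real \<Rightarrow> real^2" where
  "on_chord s x = point x (chord \<tau> s x)"

definition stroke_start :: "nat \<Rightarrow> nat \<Rightarrow> nat" where
  "stroke_start j k = (if bent j \<and> bend_idx j \<le> k then bend_idx j else 0)"

definition stroke_end :: "nat \<Rightarrow> nat \<Rightarrow> nat" where
  "stroke_end j k = (if bent j \<and> k < bend_idx j then bend_idx j else plen j)"

definition inner_vertex :: "nat \<Rightarrow> nat \<Rightarrow> bool" where
  "inner_vertex j k \<longleftrightarrow> j < f \<and> stroke_start j k < k \<and> k < stroke_end j k"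

text \<open>Every vertex outside \<open>Anchors\<close> is an inner vertex of a unique path.\<close>
definition draw :: "'a \<Rightarrow> real^2" where
  "draw v = (if v \<in> Anchors then point (\<tau> v) ((\<tau> v)\<^sup>2)
     else (let (j, k) = SOME (j, k). inner_vertex j k \<and> P j ! k = v in on_chord (stroke_of j k) (X j k)))"

lemma X_ends: "j < f \<Longrightarrow> X j 0 = \<tau> (src j)" "j < f \<Longrightarrow> X j (plen j) = \<tau> (tgt j)"
  "j < f \<Longrightarrow> bent j \<Longrightarrow> X j (bend_idx j) = \<tau> (bend j)"
  using admissible_X unfolding admissible_def by auto

lemma X_subdivides: "j < f \<Longrightarrow> subdivides (X j) (plen j) (\<lambda>k. crossings (stroke_of j k))"
  using admissible_X unfolding admissible_def by auto

lemma X_less: "j < f \<Longrightarrow> i < k \<Longrightarrow> k \<le> plen j \<Longrightarrow> X j i < X j k"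
  using subdivides_less[OF X_subdivides] by blast

lemma X_le: "j < f \<Longrightarrow> i \<le> k \<Longrightarrow> k \<le> plen j \<Longrightarrow> X j i \<le> X j k"
  using subdivides_le[OF X_subdivides] by blast

lemma X_inj: "j < f \<Longrightarrow> i \<le> plen j \<Longrightarrow> k \<le> plen j \<Longrightarrow> X j i = X j k \<Longrightarrow> i = k"
  using X_less[of j i k] X_less[of j k i] by (cases i k rule: linorder_cases) auto

lemma X_avoids_crossings: "j < f \<Longrightarrow> 0 < k \<Longrightarrow> k < plen j \<Longrightarrow> X j k \<notin> crossings (stroke_of j k)"
  using X_subdivides unfolding subdivides_def by blast

lemma X_piece_one_crossing:
  assumes "j < f" "k < plen j" "x \<in> crossings (stroke_of j k)" "y \<in> crossings (stroke_of j k)"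
    "x \<in> {X j k..X j (Suc k)}" "y \<in> {X j k..X j (Suc k)}"
  shows "x = y"
  using X_subdivides[OF assms(1)] assms(2-6) unfolding subdivides_def by blast

lemma stroke_of_owner: "j < f \<Longrightarrow> j' < f \<Longrightarrow> stroke_of j k = stroke_of j' k' \<Longrightarrow> j = j'"
  using stroke_owner_unique[of j j' "stroke_of j k"] stroke_of_in_strokes[of j k] stroke_of_in_strokes[of j' k']
  by simp

lemma stroke_start_le: "stroke_start j k \<le> k"
  unfolding stroke_start_def by auto

lemma stroke_end_bounds: "j < f \<Longrightarrow> k \<le> plen j \<Longrightarrow> k \<le> stroke_end j k" "j < f \<Longrightarrow> stroke_end j k \<le> plen j"
  "k < plen j \<Longrightarrow> Suc k \<le> stroke_end j k"
  unfolding stroke_end_def using bend_idx_bounds by (auto simp: less_imp_le)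

lemma stroke_of_ends:
  assumes "j < f"
  shows "fst (stroke_of j k) = P j ! stroke_start j k" "snd (stroke_of j k) = P j ! stroke_end j k"
    "lo (stroke_of j k) = X j (stroke_start j k)" "hi (stroke_of j k) = X j (stroke_end j k)"
  using X_ends[OF assms]
  unfolding lo_def hi_def stroke_of_def stroke_start_def stroke_end_def src_def tgt_def bend_def by auto

lemma stroke_of_range:
  assumes "j < f" "k < plen j"
  shows "lo (stroke_of j k) \<le> X j k" "X j (Suc k) \<le> hi (stroke_of j k)"
  using X_le[OF assms(1) stroke_start_le] X_le[OF assms(1) stroke_end_bounds(3)[OF assms(2)]
    stroke_end_bounds(2)[OF assms(1)]] stroke_of_ends(3,4)[OF assms(1)] assms(2) by auto

lemma vertex_cases:
  assumes "j < f" "k \<le> plen j"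
  shows "k = stroke_start j k \<or> k = stroke_end j k \<or> inner_vertex j k"
  using stroke_start_le[of j k] stroke_end_bounds(1)[OF assms] assms(1) unfolding inner_vertex_def by linarith

lemma inner_vertex_cases: "inner_vertex j k \<longleftrightarrow> j < f \<and> 0 < k \<and> k < plen j \<and> \<not> (bent j \<and> k = bend_idx j)"
  unfolding inner_vertex_def stroke_start_def stroke_end_def using bend_idx_bounds[of j] by auto

lemma inner_vertex_notin_Anchors:
  assumes "inner_vertex j k"
  shows "P j ! k \<notin> Anchors"
proof
  assume "P j ! k \<in> Anchors"
  moreover have "P j ! k \<in> Internal" using assms unfolding inner_vertex_cases Internal_def by blast
  ultimately obtain i where i: "i < f" "bent i" "P j ! k = bend i"
    using Anchors_cases unfolding Terminals_def by blast
  then have "j = i" "k = bend_idx i"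
    using internal_vertex_unique[of i "bend_idx i" j k] bend_idx_bounds[OF i(1,2)] assms
    unfolding inner_vertex_cases bend_def by auto
  then show False using assms i(2) unfolding inner_vertex_cases by simp
qed

lemma inner_vertex_unique: "inner_vertex j k \<Longrightarrow> inner_vertex j' k' \<Longrightarrow> P j' ! k' = P j ! k \<Longrightarrow> j' = j \<and> k' = k"
  using internal_vertex_unique[of j k j' k'] unfolding inner_vertex_cases by auto

lemma inner_vertex_strict:
  assumes "inner_vertex j k"
  shows "lo (stroke_of j k) < X j k" "X j k < hi (stroke_of j k)" "X j k \<notin> crossings (stroke_of j k)"
  using assms X_less[of j "stroke_start j k" k] X_less[of j k "stroke_end j k"] stroke_of_ends(3,4)[of j k]
    stroke_end_bounds(2)[of j k] X_avoids_crossings[of j k] unfolding inner_vertex_def inner_vertex_cases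
  by auto

lemma draw_Anchors: "v \<in> Anchors \<Longrightarrow> draw v = point (\<tau> v) ((\<tau> v)\<^sup>2)"
  unfolding draw_def by simp

lemma draw_inner_vertex:
  assumes "inner_vertex j k"
  shows "draw (P j ! k) = on_chord (stroke_of j k) (X j k)"
proof -
  define jk where "jk = (SOME (j', k'). inner_vertex j' k' \<and> P j' ! k' = P j ! k)"
  have "inner_vertex (fst jk) (snd jk) \<and> P (fst jk) ! snd jk = P j ! k"
    using someI[of "\<lambda>(j', k'). inner_vertex j' k' \<and> P j' ! k' = P j ! k" "(j, k)"] assms
    unfolding jk_def by auto
  then have "fst jk = j \<and> snd jk = k" using inner_vertex_unique[OF assms, of "fst jk" "snd jk"] by blast
  then have "jk = (j, k)" by (simp add: prod_eq_iff)
  then show ?thesis using inner_vertex_notin_Anchors[OF assms] unfolding draw_def jk_def[symmetric] by simp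
qed

lemma draw_P_nth:
  assumes "j < f" "k \<le> plen j"
  shows "draw (P j ! k) = on_chord (stroke_of j k) (X j k)"
proof -
  consider "k = stroke_start j k" | "k = stroke_end j k" | "inner_vertex j k"
    using vertex_cases[OF assms] by blast
  then show ?thesis
  proof cases
    case 1
    then have "P j ! k = fst (stroke_of j k)" "X j k = lo (stroke_of j k)" using stroke_of_ends[OF assms(1)] by simp_all
    then show ?thesis
      using draw_Anchors Strokes_in_Anchors stroke_of_in_Strokes[OF assms(1)] chord_lo_hi(1)
      unfolding on_chord_def lo_def by simp
  next
    case 2
    then have "P j ! k = snd (stroke_of j k)" "X j k = hi (stroke_of j k)" using stroke_of_ends[OF assms(1)] by simp_all
    then show ?thesis
      using draw_Anchors Strokes_in_Anchors stroke_of_in_Strokes[OF assms(1)] chord_lo_hi(2)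
      unfolding on_chord_def hi_def by simp
  qed (rule draw_inner_vertex)
qed

text \<open>At the bend the two strokes of a path share their endpoint on the parabola.\<close>
lemma draw_P_Suc:
  assumes "j < f" "k < plen j"
  shows "draw (P j ! Suc k) = on_chord (stroke_of j k) (X j (Suc k))"
proof (cases "stroke_of j (Suc k) = stroke_of j k")
  case True
  then show ?thesis using draw_P_nth[OF assms(1)] assms(2) by simp
next
  case False
  then have "bent j" "Suc k = bend_idx j" unfolding stroke_of_def by (auto split: if_splits)
  then have "stroke_of j k = (src j, bend j)" "stroke_of j (Suc k) = (bend j, tgt j)" "X j (Suc k) = \<tau> (bend j)"
    using X_ends(3)[OF assms(1)] unfolding stroke_of_def by auto
  then show ?thesis
    using draw_P_nth[OF assms(1), of "Suc k"] assms(2) chord_at_ends[of \<tau> "(src j, bend j)"]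
      chord_at_ends[of \<tau> "(bend j, tgt j)"] unfolding on_chord_def by simp
qed

lemma on_chord_eq_iff: "on_chord s x = on_chord s' x' \<longleftrightarrow> x = x' \<and> chord \<tau> s x = chord \<tau> s' x'"
  unfolding on_chord_def by simp

lemma seg_edge:
  assumes "j < f" "k < plen j"
  shows "seg draw (edge j k) = on_chord (stroke_of j k) ` {X j k..X j (Suc k)}"
proof -
  let ?s = "stroke_of j k"
  let ?m = "\<tau> (fst ?s) + \<tau> (snd ?s)" and ?c = "- (\<tau> (fst ?s) * \<tau> (snd ?s))"
  have line: "on_chord ?s x = point x (?m * x + ?c)" for x unfolding on_chord_def chord_def by simp
  have "X j k \<le> X j (Suc k)" using X_le[OF assms(1)] assms(2) by simp
  then have "closed_segment (on_chord ?s (X j k)) (on_chord ?s (X j (Suc k))) = on_chord ?s ` {X j k..X j (Suc k)}"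
    unfolding line by (rule closed_segment_on_line)
  then show ?thesis
    using draw_P_nth[OF assms(1), of k] draw_P_Suc[OF assms] assms(2)
    unfolding seg_def edge_def by (simp add: segment_convex_hull)
qed

lemma in_seg_edge_iff:
  "j < f \<Longrightarrow> k < plen j \<Longrightarrow> z \<in> seg draw (edge j k) \<longleftrightarrow> (\<exists>x\<in>{X j k..X j (Suc k)}. z = on_chord (stroke_of j k) x)"
  using seg_edge by auto

lemma V_cases:
  assumes "v \<in> V"
  shows "v \<in> Anchors \<or> (\<exists>j k. inner_vertex j k \<and> v = P j ! k)"
proof (cases "v \<in> Anchors")
  case False
  then obtain j k where jk: "j < f" "0 < k" "k < plen j" "v = P j ! k"
    using assms Terminals_in_Anchors unfolding Terminals_def Internal_def by blast
  then have "\<not> (bent j \<and> k = bend_idx j)" using False bend_in_Anchors unfolding bend_def by blast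
  then show ?thesis using jk unfolding inner_vertex_cases by blast
qed simp

lemma inner_vertexI:
  assumes "j < f" "k \<le> plen j" "lo (stroke_of j k) < X j k" "X j k < hi (stroke_of j k)"
  shows "inner_vertex j k"
  using vertex_cases[OF assms(1,2)] assms(3,4) stroke_of_ends(3,4)[OF assms(1)] by auto

lemma crossingsI: "s \<in> Strokes \<Longrightarrow> s' \<in> Strokes \<Longrightarrow> s' \<noteq> s \<Longrightarrow> meets s s' x \<Longrightarrow> x \<in> crossings s"
  unfolding crossings_def by blast

lemma draw_Anchors_ne_inner:
  assumes "c \<in> Anchors" "inner_vertex j k"
  shows "draw c \<noteq> draw (P j ! k)"
proof
  assume "draw c = draw (P j ! k)"
  then have "X j k = \<tau> c" "chord \<tau> (stroke_of j k) (X j k) = (X j k)\<^sup>2"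
    using draw_Anchors[OF assms(1)] draw_inner_vertex[OF assms(2)] unfolding on_chord_def by auto
  then show False using chord_above_lo_hi inner_vertex_strict(1,2)[OF assms(2)] by fastforce
qed

lemma inj_on_draw: "inj_on draw V"
proof (rule inj_onI)
  fix u v assume u: "u \<in> V" and v: "v \<in> V" and eq: "draw u = draw v"
  from V_cases[OF u] V_cases[OF v] show "u = v"
  proof (elim disjE exE conjE)
    assume "u \<in> Anchors" "v \<in> Anchors"
    then show ?thesis using eq draw_Anchors tau_inj by simp
  next
    fix j k assume "u \<in> Anchors" "inner_vertex j k" "v = P j ! k"
    then show ?thesis using eq draw_Anchors_ne_inner by blast
  next
    fix j k assume "v \<in> Anchors" "inner_vertex j k" "u = P j ! k"
    then show ?thesis using eq draw_Anchors_ne_inner by metis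
  next
    fix j k j' k' assume i: "inner_vertex j k" "u = P j ! k" and i': "inner_vertex j' k'" "v = P j' ! k'"
    let ?s = "stroke_of j k" and ?s' = "stroke_of j' k'"
    have x: "X j' k' = X j k" "chord \<tau> ?s (X j k) = chord \<tau> ?s' (X j k)"
      using eq draw_inner_vertex[OF i(1)] draw_inner_vertex[OF i'(1)] i(2) i'(2) on_chord_eq_iff by auto
    have j: "j < f" "j' < f" "k \<le> plen j" "k' \<le> plen j'" using i(1) i'(1) unfolding inner_vertex_cases by auto
    show "u = v"
    proof (cases "?s = ?s'")
      case True
      then have "j' = j" using stroke_of_owner j by metis
      then show ?thesis using X_inj[of j k k'] x(1) j i(2) i'(2) by simp
    next
      case False
      then have "meets ?s ?s' (X j k)"
        using inner_vertex_strict[OF i(1)] inner_vertex_strict[OF i'(1)] x unfolding meets_def by simp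
      then have "X j k \<in> crossings ?s" using crossingsI stroke_of_in_Strokes j(1,2) False by metis
      then show ?thesis using inner_vertex_strict(3)[OF i(1)] by simp
    qed
  qed
qed

lemma seg_edge_on_parabola:
  assumes "j < f" "k < plen j" "x \<in> {X j k..X j (Suc k)}" "chord \<tau> (stroke_of j k) x = x\<^sup>2"
  shows "x = X j k \<and> x = \<tau> (P j ! k) \<and> P j ! k \<in> Anchors \<or>
    x = X j (Suc k) \<and> x = \<tau> (P j ! Suc k) \<and> P j ! Suc k \<in> Anchors"
proof -
  let ?s = "stroke_of j k"
  have A: "fst ?s \<in> Anchors" "snd ?s \<in> Anchors"
    using Strokes_in_Anchors stroke_of_in_Strokes[OF assms(1)] by auto
  have range: "lo ?s \<le> x" "x \<le> hi ?s" using stroke_of_range[OF assms(1,2)] assms(3) by auto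
  have "x = lo ?s \<or> x = hi ?s" using assms(4) chord_eq[of \<tau> ?s x] unfolding lo_def hi_def by simp
  then show ?thesis
  proof
    assume "x = lo ?s"
    then have "X j k = X j (stroke_start j k)"
      using range stroke_of_range[OF assms(1,2)] assms(3) stroke_of_ends(3)[OF assms(1)] by auto
    then have "k = stroke_start j k" using X_inj[OF assms(1)] stroke_start_le[of j k] assms(2) by simp
    then show ?thesis using stroke_of_ends(1,3)[OF assms(1), of k] \<open>x = lo ?s\<close> A unfolding lo_def by auto
  next
    assume "x = hi ?s"
    then have "X j (Suc k) = X j (stroke_end j k)"
      using range stroke_of_range[OF assms(1,2)] assms(3) stroke_of_ends(4)[OF assms(1)] by auto
    then have "Suc k = stroke_end j k" using X_inj[OF assms(1)] stroke_end_bounds(2)[OF assms(1)] assms(2) by simp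
    then show ?thesis using stroke_of_ends(2,4)[OF assms(1), of k] \<open>x = hi ?s\<close> A unfolding hi_def by auto
  qed
qed

lemma draw_notin_seg:
  assumes j: "j < f" "k < plen j" and v: "v \<in> V" "v \<notin> edge j k"
  shows "draw v \<notin> seg draw (edge j k)"
proof
  let ?s = "stroke_of j k"
  assume "draw v \<in> seg draw (edge j k)"
  then obtain x where x: "x \<in> {X j k..X j (Suc k)}" "draw v = on_chord ?s x" using in_seg_edge_iff[OF j] by auto
  from V_cases[OF v(1)] show False
  proof (elim disjE exE conjE)
    assume vA: "v \<in> Anchors"
    then have "x = \<tau> v" "chord \<tau> ?s x = x\<^sup>2" using x(2) draw_Anchors unfolding on_chord_def by auto
    then have "\<tau> v = \<tau> (P j ! k) \<and> P j ! k \<in> Anchors \<or> \<tau> v = \<tau> (P j ! Suc k) \<and> P j ! Suc k \<in> Anchors"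
      using seg_edge_on_parabola[OF j x(1)] by auto
    then show False using tau_inj[OF vA] v(2) unfolding edge_def by auto
  next
    fix j' k' assume i: "inner_vertex j' k'" "v = P j' ! k'"
    let ?s' = "stroke_of j' k'"
    have j': "j' < f" "k' \<le> plen j'" using i(1) unfolding inner_vertex_cases by auto
    have xe: "X j' k' = x" "chord \<tau> ?s' x = chord \<tau> ?s x"
      using x(2) draw_inner_vertex[OF i(1)] i(2) on_chord_eq_iff by auto
    show False
    proof (cases "?s' = ?s")
      case True
      then have "j' = j" using stroke_of_owner j(1) j'(1) by metis
      then have "\<not> k' < k" "\<not> Suc k < k'" using X_less[of j k' k] X_less[of j "Suc k" k'] x(1) xe(1) j j' by force+
      then have "k' = k \<or> k' = Suc k" by auto
      then show False using v(2) i(2) \<open>j' = j\<close> unfolding edge_def by auto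
    next
      case False
      have x': "lo ?s' < x" "x < hi ?s'" using inner_vertex_strict[OF i(1)] xe(1) by auto
      then have above: "x\<^sup>2 < chord \<tau> ?s x" using chord_above_lo_hi[of ?s' x] xe(2) by simp
      then have "x \<noteq> lo ?s" "x \<noteq> hi ?s" using chord_lo_hi[of ?s] by auto
      moreover have "lo ?s \<le> x" "x \<le> hi ?s" using x(1) stroke_of_range[OF j] by auto
      ultimately have "lo ?s < x" "x < hi ?s" by simp_all
      then have "x \<in> crossings ?s'"
        using crossingsI[of ?s' ?s x] x' xe(2) stroke_of_in_Strokes j(1) j'(1) False unfolding meets_def by auto
      then show False using inner_vertex_strict(3)[OF i(1)] xe(1) by simp
    qed
  qed
qed

lemma seg_inter_point:
  assumes "j < f" "k < plen j" "j' < f" "k' < plen j'"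
    and "z \<in> seg draw (edge j k)" "z \<in> seg draw (edge j' k')"
  obtains x where "z = on_chord (stroke_of j k) x" "x \<in> {X j k..X j (Suc k)}" "x \<in> {X j' k'..X j' (Suc k')}"
    "chord \<tau> (stroke_of j k) x = chord \<tau> (stroke_of j' k') x"
proof -
  obtain x where x: "x \<in> {X j k..X j (Suc k)}" "z = on_chord (stroke_of j k) x"
    using in_seg_edge_iff[OF assms(1,2)] assms(5) by blast
  obtain x' where x': "x' \<in> {X j' k'..X j' (Suc k')}" "z = on_chord (stroke_of j' k') x'"
    using in_seg_edge_iff[OF assms(3,4)] assms(6) by blast
  have "on_chord (stroke_of j k) x = on_chord (stroke_of j' k') x'" using x(2) x'(2) by simp
  then have "x' = x" "chord \<tau> (stroke_of j k) x = chord \<tau> (stroke_of j' k') x"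
    unfolding on_chord_eq_iff by auto
  then show ?thesis using that[of x] x x' by simp
qed

lemma adjacent_edge:
  assumes "j < f" "k < plen j" "k' < plen j" "edge j k \<inter> edge j k' \<noteq> {}" "k \<noteq> k'"
  shows "k' = Suc k \<or> k = Suc k'"
proof -
  have "P j ! k = P j ! k' \<or> P j ! k = P j ! Suc k' \<or> P j ! Suc k = P j ! k' \<or> P j ! Suc k = P j ! Suc k'"
    using assms(4) unfolding edge_def by auto
  then have "k = k' \<or> k = Suc k' \<or> Suc k = k' \<or> Suc k = Suc k'"
    using P_nth_inj[OF assms(1), of k k'] P_nth_inj[OF assms(1), of k "Suc k'"]
      P_nth_inj[OF assms(1), of "Suc k" k'] P_nth_inj[OF assms(1), of "Suc k" "Suc k'"] assms(2,3) by auto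
  then show ?thesis using assms(5) by auto
qed

lemma seg_disjoint_same_path:
  assumes "j < f" "k < plen j" "k' < plen j" "edge j k \<inter> edge j k' = {}"
  shows "seg draw (edge j k) \<inter> seg draw (edge j k') = {}"
proof -
  have "k \<noteq> k'" "k' \<noteq> Suc k" "k \<noteq> Suc k'" using assms(4) unfolding edge_def by auto
  then have "X j (Suc k) < X j k' \<or> X j (Suc k') < X j k"
    using X_less[OF assms(1), of "Suc k" k'] X_less[OF assms(1), of "Suc k'" k] assms(2,3) by linarith
  moreover have False if zz: "z \<in> seg draw (edge j k)" "z \<in> seg draw (edge j k')" for z
  proof -
    obtain x where "x \<in> {X j k..X j (Suc k)}" "x \<in> {X j k'..X j (Suc k')}"
      using seg_inter_point[OF assms(1,2) assms(1,3) zz] by blast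
    then show False using calculation by auto
  qed
  ultimately show ?thesis by blast
qed

lemma seg_inter_adjacent:
  assumes j: "j < f" "k < plen j" and j': "j' < f" "k' < plen j'"
    and ne: "edge j k \<noteq> edge j' k'" and v: "v \<in> edge j k" "v \<in> edge j' k'"
  shows "seg draw (edge j k) \<inter> seg draw (edge j' k') = draw ` (edge j k \<inter> edge j' k')"
proof
  show "draw ` (edge j k \<inter> edge j' k') \<subseteq> seg draw (edge j k) \<inter> seg draw (edge j' k')"
    unfolding seg_def by (auto intro: hull_inc)
  show "seg draw (edge j k) \<inter> seg draw (edge j' k') \<subseteq> draw ` (edge j k \<inter> edge j' k')"
  proof
    fix z assume "z \<in> seg draw (edge j k) \<inter> seg draw (edge j' k')"
    then obtain x where x: "z = on_chord (stroke_of j k) x" "x \<in> {X j k..X j (Suc k)}" "x \<in> {X j' k'..X j' (Suc k')}"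
      "chord \<tau> (stroke_of j k) x = chord \<tau> (stroke_of j' k') x"
      using seg_inter_point[OF j j'] by blast
    show "z \<in> draw ` (edge j k \<inter> edge j' k')"
    proof (cases "stroke_of j k = stroke_of j' k'")
      case True
      then have "j' = j" using stroke_of_owner j j' by metis
      then have "k' = Suc k \<or> k = Suc k'" using adjacent_edge[OF j, of k'] j'(2) ne v by auto
      then have "x = X j (Suc k) \<and> P j ! Suc k \<in> edge j k \<inter> edge j' k' \<or> x = X j k \<and> P j ! k \<in> edge j k \<inter> edge j' k'"
        using x(2,3) \<open>j' = j\<close> unfolding edge_def by auto
      then show ?thesis
      proof (elim disjE conjE)
        assume "x = X j (Suc k)" "P j ! Suc k \<in> edge j k \<inter> edge j' k'"
        then show ?thesis using x(1) draw_P_Suc[OF j] by (metis image_eqI)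
      next
        assume "x = X j k" "P j ! k \<in> edge j k \<inter> edge j' k'"
        then show ?thesis using x(1) draw_P_nth[OF j(1), of k] j(2) by (metis image_eqI less_imp_le)
      qed
    next
      case False
      have "draw v \<in> seg draw (edge j k)" "draw v \<in> seg draw (edge j' k')"
        using v unfolding seg_def by (auto intro: hull_inc)
      then obtain y where y: "draw v = on_chord (stroke_of j k) y"
        "chord \<tau> (stroke_of j k) y = chord \<tau> (stroke_of j' k') y"
        using seg_inter_point[OF j j'] by metis
      have "x = y" using chords_meet_once_Strokes[OF _ _ False x(4) y(2)] stroke_of_in_Strokes j(1) j'(1) by blast
      then have "z = draw v" using x(1) y(1) by simp
      then show ?thesis using v by blast
    qed
  qed
qed

lemma seg_inter_subsingleton:
  assumes j: "j < f" "k < plen j" and j': "j' < f" "k' < plen j'"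
    and dj: "edge j k \<inter> edge j' k' = {}"
  shows "\<exists>z. seg draw (edge j k) \<inter> seg draw (edge j' k') \<subseteq> {z}"
proof (cases "stroke_of j k = stroke_of j' k'")
  case True
  then have "j' = j" using stroke_of_owner j j' by metis
  then show ?thesis using seg_disjoint_same_path[OF j, of k'] j'(2) dj by auto
next
  case False
  have "z = z'" if zz: "z \<in> seg draw (edge j k) \<inter> seg draw (edge j' k')"
    "z' \<in> seg draw (edge j k) \<inter> seg draw (edge j' k')" for z z'
  proof -
    obtain x where x: "z = on_chord (stroke_of j k) x" "chord \<tau> (stroke_of j k) x = chord \<tau> (stroke_of j' k') x"
      using seg_inter_point[OF j j'] zz(1) by blast
    obtain x' where x': "z' = on_chord (stroke_of j k) x'" "chord \<tau> (stroke_of j k) x' = chord \<tau> (stroke_of j' k') x'"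
      using seg_inter_point[OF j j'] zz(2) by blast
    show ?thesis using chords_meet_once_Strokes[OF _ _ False x(2) x'(2)] stroke_of_in_Strokes j(1) j'(1) x(1) x'(1)
      by blast
  qed
  then show ?thesis by blast
qed

lemma seg_avoids_ends_of_disjoint_edge:
  assumes j: "j < f" "k < plen j" and j': "j' < f" "k' < plen j'" and dj: "edge j k \<inter> edge j' k' = {}"
    and z: "z \<in> seg draw (edge j' k')" "z = on_chord (stroke_of j k) x" "x = X j k \<or> x = X j (Suc k)"
  shows False
proof -
  obtain v where v: "v \<in> edge j k" "draw v = z"
    using z(2,3) draw_P_nth[OF j(1), of k] draw_P_Suc[OF j] j(2) unfolding edge_def by auto
  have "v \<in> V" using v(1) edge_in_E[OF j] simple unfolding simple_graph_def by auto
  then show False using draw_notin_seg[OF j'] v dj z(1) by auto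
qed

lemma crossing_meets:
  assumes j: "j < f" "k < plen j" and j': "j' < f" "k' < plen j'"
    and dj: "edge j k \<inter> edge j' k' = {}" and z: "z \<in> seg draw (edge j k)" "z \<in> seg draw (edge j' k')"
  obtains x where "x \<in> {X j k..X j (Suc k)}" "x \<in> {X j' k'..X j' (Suc k')}"
    "stroke_of j k \<noteq> stroke_of j' k'" "meets (stroke_of j k) (stroke_of j' k') x"
proof -
  let ?s = "stroke_of j k" and ?s' = "stroke_of j' k'"
  obtain x where x: "z = on_chord ?s x" "x \<in> {X j k..X j (Suc k)}" "x \<in> {X j' k'..X j' (Suc k')}"
    "chord \<tau> ?s x = chord \<tau> ?s' x"
    using seg_inter_point[OF j j' z] by blast
  have z': "z = on_chord ?s' x" using x(1,4) unfolding on_chord_def by simp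
  have ne: "?s \<noteq> ?s'"
  proof
    assume "?s = ?s'"
    then have "j' = j" using stroke_of_owner j j' by metis
    then show False using seg_disjoint_same_path[OF j, of k'] j'(2) dj z by auto
  qed
  have dj': "edge j' k' \<inter> edge j k = {}" using dj by blast
  have "x \<noteq> X j k" "x \<noteq> X j (Suc k)"
    using seg_avoids_ends_of_disjoint_edge[OF j j' dj z(2) x(1)] by auto
  then have "lo ?s < x" "x < hi ?s" using stroke_of_range[OF j] x(2) by auto
  moreover have "x \<noteq> X j' k'" "x \<noteq> X j' (Suc k')"
    using seg_avoids_ends_of_disjoint_edge[OF j' j dj' z(1) z'] by auto
  then have "lo ?s' < x" "x < hi ?s'" using stroke_of_range[OF j'] x(3) by auto
  ultimately have "meets ?s ?s' x" using x(4) unfolding meets_def by simp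
  then show ?thesis using that x(2,3) ne by blast
qed

text \<open>Two edges of one stroke cannot both contain a crossing point: it would be a vertex strictly
  inside the stroke, and those avoid the crossings.\<close>
lemma crossing_in_one_edge_of_stroke:
  assumes "j < f" "k1 < k2" "k2 < plen j" "stroke_of j k1 = stroke_of j k2"
    and "x \<in> {X j k1..X j (Suc k1)}" "X j k2 \<le> x" "x \<in> crossings (stroke_of j k1)"
  shows False
proof -
  have "X j (Suc k1) \<le> X j k2" using X_le[OF assms(1), of "Suc k1" k2] assms(2,3) by simp
  then have "x = X j k2" using assms(5,6) by simp
  moreover have "lo (stroke_of j k2) < x" "x < hi (stroke_of j k2)"
    using assms(4,7) crossings_subset[of "stroke_of j k2"] by auto
  ultimately have "inner_vertex j k2" using inner_vertexI[OF assms(1)] assms(3) by simp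
  then show False using inner_vertex_strict(3) assms(4,7) \<open>x = X j k2\<close> by simp
qed

lemma crossing_edge_meets:
  assumes "j < f" "k < plen j" "e \<in> crossing_edges E draw (edge j k)"
  obtains j1 k1 x where "j1 < f" "k1 < plen j1" "e = edge j1 k1" "x \<in> {X j k..X j (Suc k)}"
    "x \<in> {X j1 k1..X j1 (Suc k1)}" "stroke_of j k \<noteq> stroke_of j1 k1" "meets (stroke_of j k) (stroke_of j1 k1) x"
proof -
  have "e \<in> E" using assms(3) unfolding crossing_edges_def by simp
  then obtain j1 k1 where jk1: "j1 < f" "k1 < plen j1" "e = edge j1 k1" by (rule E_obtain_edge)
  moreover have "seg draw (edge j k) \<inter> seg draw (edge j1 k1) \<noteq> {}" "edge j k \<inter> edge j1 k1 = {}"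
    using assms(3) jk1(3) unfolding crossing_edges_def by auto
  then obtain z where "z \<in> seg draw (edge j k)" "z \<in> seg draw (edge j1 k1)" "edge j k \<inter> edge j1 k1 = {}"
    by blast
  ultimately show ?thesis using crossing_meets[OF assms(1,2) jk1(1,2)] that by metis
qed

text \<open>Two edges crossing \<open>edge j k\<close> meet its chord in the one crossing point of its piece;
  as no three chords are concurrent there, they lie on one stroke, and then on one edge.\<close>
lemma card_crossing_edges:
  assumes j: "j < f" "k < plen j"
  shows "card (crossing_edges E draw (edge j k)) \<le> 1"
proof -
  let ?s = "stroke_of j k" and ?C = "crossing_edges E draw (edge j k)"
  have "e1 = e2" if e12: "e1 \<in> ?C" "e2 \<in> ?C" for e1 e2
  proof -
    obtain j1 k1 x1 where h1: "j1 < f" "k1 < plen j1" "e1 = edge j1 k1" "x1 \<in> {X j k..X j (Suc k)}"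
      "x1 \<in> {X j1 k1..X j1 (Suc k1)}" "?s \<noteq> stroke_of j1 k1" "meets ?s (stroke_of j1 k1) x1"
      using crossing_edge_meets[OF j e12(1)] by blast
    obtain j2 k2 x2 where h2: "j2 < f" "k2 < plen j2" "e2 = edge j2 k2" "x2 \<in> {X j k..X j (Suc k)}"
      "x2 \<in> {X j2 k2..X j2 (Suc k2)}" "?s \<noteq> stroke_of j2 k2" "meets ?s (stroke_of j2 k2) x2"
      using crossing_edge_meets[OF j e12(2)] by blast
    let ?s1 = "stroke_of j1 k1" and ?s2 = "stroke_of j2 k2"
    have S: "?s \<in> Strokes" "?s1 \<in> Strokes" "?s2 \<in> Strokes"
      using stroke_of_in_Strokes j(1) h1(1) h2(1) by auto
    have "x1 \<in> crossings ?s" "x2 \<in> crossings ?s"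
      using crossingsI[OF S(1) S(2)] crossingsI[OF S(1) S(3)] h1(6,7) h2(6,7) by auto
    then have "x1 = x2" using X_piece_one_crossing[OF j] h1(4) h2(4) by blast
    have "?s1 = ?s2"
      using no_triple_meeting[OF S] h1(6,7) h2(6,7) \<open>x1 = x2\<close> by blast
    then have "j2 = j1" using stroke_of_owner h1(1) h2(1) by metis
    have "x1 \<in> crossings ?s1" using crossingsI[OF S(2,1)] h1(6,7) meets_sym by metis
    have same: "stroke_of j1 k1 = stroke_of j1 k2" "x1 \<in> {X j1 k2..X j1 (Suc k2)}"
      using \<open>?s1 = ?s2\<close> h2(5) \<open>x1 = x2\<close> \<open>j2 = j1\<close> by simp_all
    have "\<not> k1 < k2"
      using crossing_in_one_edge_of_stroke[OF h1(1) _ _ same(1) h1(5) _ \<open>x1 \<in> crossings ?s1\<close>] h2(2) same(2)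
        \<open>j2 = j1\<close> by auto
    moreover have "\<not> k2 < k1"
      using crossing_in_one_edge_of_stroke[OF h1(1) _ h1(2) same(1)[symmetric] same(2) _]
        \<open>x1 \<in> crossings ?s1\<close> same(1) h1(5) by auto
    ultimately have "k1 = k2" by simp
    then show ?thesis using h1(3) h2(3) \<open>j2 = j1\<close> by simp
  qed
  moreover have "finite ?C" using finite_E unfolding crossing_edges_def by simp
  ultimately show ?thesis using card_le_Suc0_iff_eq by (metis One_nat_def)
qed

theorem straight_line_embedding_draw: "straight_line_embedding V E draw"
  unfolding straight_line_embedding_def
proof (intro conjI ballI impI)
  show "inj_on draw V" by (rule inj_on_draw)
next
  fix e w assume "e \<in> E" "w \<in> V" "w \<notin> e"
  moreover obtain j k where "j < f" "k < plen j" "e = edge j k" using E_obtain_edge \<open>e \<in> E\<close> by blast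
  ultimately show "draw w \<notin> seg draw e" using draw_notin_seg by blast
next
  fix e e' assume e: "e \<in> E" "e' \<in> E" "e \<noteq> e'" "e \<inter> e' \<noteq> {}"
  obtain j k where "j < f" "k < plen j" "e = edge j k" using E_obtain_edge[OF e(1)] by blast
  moreover obtain j' k' where "j' < f" "k' < plen j'" "e' = edge j' k'" using E_obtain_edge[OF e(2)] by blast
  ultimately show "seg draw e \<inter> seg draw e' = draw ` (e \<inter> e')" using seg_inter_adjacent e(3,4) by blast
next
  fix e e' assume e: "e \<in> E" "e' \<in> E" "e \<noteq> e'" "e \<inter> e' = {}"
  obtain j k where "j < f" "k < plen j" "e = edge j k" using E_obtain_edge[OF e(1)] by blast
  moreover obtain j' k' where "j' < f" "k' < plen j'" "e' = edge j' k'" using E_obtain_edge[OF e(2)] by blast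
  ultimately show "\<exists>x. seg draw e \<inter> seg draw e' \<subseteq> {x}" using seg_inter_subsingleton e(4) by blast
qed

end

section \<open>Orienting the paths\<close>

lemma (in oriented_path_partition) geometric_1_planar_oriented: "geometric_1_planar V E"
proof -
  obtain \<tau> where \<tau>: "key_monotone \<tau> Anchors" "generic \<tau> Anchors" by (rule generic_placement_exists)
  interpret placement: parabola_placement V E f P rank \<tau>
    using \<tau> by unfold_locales
  obtain X where X: "\<forall>j<f. placement.admissible j (X j)" using placement.admissible_exists by blast
  interpret drawing: parabola_drawing V E f P rank \<tau> X
    using X by unfold_locales
  have "card (crossing_edges E drawing.draw e) \<le> 1" if "e \<in> E" for e
    using E_obtain_edge[OF that] drawing.card_crossing_edges by metis
  then show ?thesis
    unfolding geometric_1_planar_def using drawing.straight_line_embedding_draw by blast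
qed

text \<open>Any injective ranking of the vertices orients the paths by reversing some of them.\<close>
lemma (in path_partition) geometric_1_planar: "geometric_1_planar V E"
proof -
  define rank where "rank = to_nat_on V"
  have rank: "inj_on rank V" unfolding rank_def using finite_V by (intro inj_on_to_nat_on countable_finite)
  define Q where "Q i = (if rank (P i ! 0) < rank (P i ! plen i) then P i else rev (P i))" for i
  have Q: "length (Q i) = length (P i)" "path_edges (Q i) = path_edges (P i)" for i
    unfolding Q_def by simp_all
  have "degree2_path V E (Q i)" if "i < f" for i
    using degree2 degree2_path_rev[of V E "P i"] that unfolding Q_def by simp
  then interpret Q: path_partition V E f Q
    using simple long disjoint covers nontrivial Q by unfold_locales (simp_all add: path_length_def)
  have "rank (Q j ! 0) < rank (Q j ! Q.plen j)" if "j < f" for j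
  proof -
    have ends: "rev (P j) ! 0 = P j ! plen j" "rev (P j) ! plen j = P j ! 0"
      using length_P[OF that] by (simp_all add: rev_nth)
    have "P j ! 0 \<noteq> P j ! plen j" using P_nth_inj[OF that, of 0 "plen j"] plen_pos[OF that] by auto
    then have "rank (P j ! 0) \<noteq> rank (P j ! plen j)"
      using rank P_nth_in_V[OF that] plen_pos[OF that] by (simp add: inj_on_eq_iff)
    moreover have "Q.plen j = plen j" unfolding Q.plen_def plen_def using Q(1) by simp
    ultimately show ?thesis unfolding Q_def using ends by auto
  qed
  then interpret oriented_path_partition V E f Q rank
    using rank by unfold_locales blast+
  show ?thesis by (rule geometric_1_planar_oriented)
qed

lemma geometric_1_planar_edgeless:
  assumes "finite V"
  shows "geometric_1_planar V {}"
proof -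
  have "inj_on (to_nat_on V) V" using assms by (intro inj_on_to_nat_on countable_finite)
  then have "inj_on (\<lambda>v. point (real (to_nat_on V v)) 0) V" unfolding inj_on_def by simp
  then show ?thesis
    unfolding geometric_1_planar_def straight_line_embedding_def by blast
qed

lemma edgeless_if_trivial_path:
  assumes "\<forall>i<f. degree2_path V E (P i)" "\<forall>i<f. path_length (P i) \<ge> f - 1" "(\<Union>i<f. path_edges (P i)) = E"
    and "i < f" "length (P i) < 2"
  shows "E = {}"
proof -
  have "P i \<noteq> []" using assms(1,4) unfolding degree2_path_def by simp
  then have "length (P i) = 1" using assms(5) by (cases "P i") auto
  then have "f = 1" "i = 0" using assms(2,4) unfolding path_length_def by force+
  then show ?thesis using assms(3) \<open>length (P i) = 1\<close> unfolding path_edges_def by auto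
qed

theorem mainTheorem13:
  fixes V :: "'a set" and E :: "'a set set" and f :: nat and P :: "nat \<Rightarrow> 'a list"
  assumes "simple_graph V E"
    and "\<forall>i<f. degree2_path V E (P i)"
    and "\<forall>i<f. path_length (P i) \<ge> f - 1"
    and "\<forall>i<f. \<forall>j<f. i \<noteq> j \<longrightarrow> path_edges (P i) \<inter> path_edges (P j) = {}"
    and "(\<Union>i<f. path_edges (P i)) = E"
  shows "geometric_1_planar V E"
proof (cases "\<forall>i<f. 2 \<le> length (P i)")
  case True
  then interpret path_partition V E f P
    using assms by unfold_locales
  show ?thesis by (rule geometric_1_planar)
next
  case False
  then have "E = {}" using edgeless_if_trivial_path[OF assms(2,3,5)] by (meson not_le)
  moreover have "finite V" using assms(1) unfolding simple_graph_def by simp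
  ultimately show ?thesis using geometric_1_planar_edgeless by simp
qed

end
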